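(* Let $R$ be a commutative ring and let $(A,d)$ be a differential graded $R$-algebra. If the graded algebra $\ker(d)$ is graded-Artinian, then $(A,d)$ is dg-Noetherian and dg-Artinian.
   Context: A differential graded (dg) $R$-algebra $(A,d)$ is a $\mathbb{Z}$-graded $R$-algebra $A$ with an $R$-linear endomorphism $d$, homogeneous of degree $1$, with $d^2=0$ and $d(ab)=d(a)b+(-1)^{|a|}a\,d(b)$ for homogeneous $a,b$. Then $\ker(d)$ is a graded subalgebra of $A$. A graded algebra is graded-Artinian if it satisfies the descending chain condition on graded ideals. A dg-ideal of $(A,d)$ is a graded ideal $I$ with $d(I)\subseteq I$; $(A,d)$ is dg-Noetherian (resp. dg-Artinian) if it satisfies the ascending (resp. descending) chain condition on dg-ideals (i.e. on dg-submodules of $A$ viewed as a dg-module over itself). *)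

theory Defs
  imports Main
begin

definition graded_decomp :: "(int \<Rightarrow> 'a::ring_1 set) \<Rightarrow> 'a \<Rightarrow> (int \<Rightarrow> 'a) \<Rightarrow> bool" where
  "graded_decomp G a c \<longleftrightarrow>
     finite {n. c n \<noteq> 0} \<and> (\<forall>n. c n \<in> G n) \<and> a = (\<Sum>n\<in>{n. c n \<noteq> 0}. c n)"

definition graded_ring :: "(int \<Rightarrow> 'a::ring_1 set) \<Rightarrow> bool" where
  "graded_ring G \<longleftrightarrow>
     (\<forall>n. 0 \<in> G n \<and> (\<forall>x\<in>G n. \<forall>y\<in>G n. x + y \<in> G n) \<and> (\<forall>x\<in>G n. - x \<in> G n)) \<and>
     (\<forall>a. \<exists>c. graded_decomp G a c) \<and>
     (\<forall>c. finite {n. c n \<noteq> 0} \<and> (\<forall>n. c n \<in> G n) \<and> (\<Sum>n\<in>{n. c n \<noteq> 0}. c n) = 0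
          \<longrightarrow> (\<forall>n. c n = 0)) \<and>
     (\<forall>m n. \<forall>x\<in>G m. \<forall>y\<in>G n. x * y \<in> G (m + n)) \<and>
     1 \<in> G 0"

definition graded_algebra :: "('r::comm_ring_1 \<Rightarrow> 'a::ring_1) \<Rightarrow> (int \<Rightarrow> 'a set) \<Rightarrow> bool" where
  "graded_algebra phi G \<longleftrightarrow>
     graded_ring G \<and>
     phi 1 = 1 \<and> (\<forall>r s. phi (r + s) = phi r + phi s) \<and> (\<forall>r s. phi (r * s) = phi r * phi s) \<and>
     (\<forall>r a. phi r * a = a * phi r) \<and>
     (\<forall>r n. \<forall>x\<in>G n. phi r * x \<in> G n)"

definition dg_algebra :: "('r::comm_ring_1 \<Rightarrow> 'a::ring_1) \<Rightarrow> (int \<Rightarrow> 'a set) \<Rightarrow> ('a \<Rightarrow> 'a) \<Rightarrow> bool" where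
  "dg_algebra phi G d \<longleftrightarrow>
     graded_algebra phi G \<and>
     (\<forall>a b. d (a + b) = d a + d b) \<and>
     (\<forall>r a. d (phi r * a) = phi r * d a) \<and>
     (\<forall>n. \<forall>x\<in>G n. d x \<in> G (n + 1)) \<and>
     (\<forall>a. d (d a) = 0) \<and>
     (\<forall>n a b. a \<in> G n \<longrightarrow> d (a * b) = d a * b + (if even n then a * d b else - (a * d b)))"

definition graded_left_ideal :: "(int \<Rightarrow> 'a::ring_1 set) \<Rightarrow> 'a set \<Rightarrow> 'a set \<Rightarrow> bool" where
  "graded_left_ideal G S I \<longleftrightarrow>
     I \<subseteq> S \<and> 0 \<in> I \<and> (\<forall>x\<in>I. \<forall>y\<in>I. x + y \<in> I) \<and> (\<forall>x\<in>I. - x \<in> I) \<and>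
     (\<forall>s\<in>S. \<forall>x\<in>I. s * x \<in> I) \<and>
     (\<forall>a\<in>I. \<forall>c. graded_decomp (\<lambda>n. G n \<inter> S) a c \<longrightarrow> (\<forall>n. c n \<in> I))"

definition graded_artinian :: "(int \<Rightarrow> 'a::ring_1 set) \<Rightarrow> 'a set \<Rightarrow> bool" where
  "graded_artinian G S \<longleftrightarrow>
     (\<forall>f :: nat \<Rightarrow> 'a set. (\<forall>k. graded_left_ideal G S (f k)) \<and> (\<forall>k. f (Suc k) \<subseteq> f k)
        \<longrightarrow> (\<exists>N. \<forall>k\<ge>N. f k = f N))"

text \<open>dg-ideals: graded left ideals stable under d (= dg-submodules of A over itself).\<close>

definition dg_ideal :: "(int \<Rightarrow> 'a::ring_1 set) \<Rightarrow> ('a \<Rightarrow> 'a) \<Rightarrow> 'a set \<Rightarrow> bool" where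
  "dg_ideal G d I \<longleftrightarrow> graded_left_ideal G UNIV I \<and> (\<forall>x\<in>I. d x \<in> I)"

definition dg_noetherian :: "(int \<Rightarrow> 'a::ring_1 set) \<Rightarrow> ('a \<Rightarrow> 'a) \<Rightarrow> bool" where
  "dg_noetherian G d \<longleftrightarrow>
     (\<forall>f :: nat \<Rightarrow> 'a set. (\<forall>k. dg_ideal G d (f k)) \<and> (\<forall>k. f k \<subseteq> f (Suc k))
        \<longrightarrow> (\<exists>N. \<forall>k\<ge>N. f k = f N))"

definition dg_artinian :: "(int \<Rightarrow> 'a::ring_1 set) \<Rightarrow> ('a \<Rightarrow> 'a) \<Rightarrow> bool" where
  "dg_artinian G d \<longleftrightarrow>
     (\<forall>f :: nat \<Rightarrow> 'a set. (\<forall>k. dg_ideal G d (f k)) \<and> (\<forall>k. f (Suc k) \<subseteq> f k)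
        \<longrightarrow> (\<exists>N. \<forall>k\<ge>N. f k = f N))"

end

theory Submission
  imports Defs "HOL-Library.Set_Algebras"
begin

text \<open>A dg-ideal \<open>I\<close> is determined by the two graded left ideals \<open>I \<inter> Z\<close> and \<open>d I\<close> of the
  algebra of cycles \<open>Z = ker d\<close>: if \<open>I \<subseteq> I'\<close> have the same cycles and the same image under \<open>d\<close>,
  then for \<open>x \<in> I'\<close> there is \<open>y \<in> I\<close> with \<open>d x = d y\<close>, and the cycle \<open>x - y\<close> of \<open>I'\<close> lies in \<open>I\<close>.
  Hence a chain of dg-ideals stabilises once the two associated chains of graded left ideals of
  \<open>Z\<close> do. For descending chains this is the hypothesis on \<open>Z\<close>; for ascending chains it is the
  graded Hopkins-Levitzki theorem: by the descending chain condition the graded Jacobson radical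
  \<open>J\<close> of \<open>Z\<close> is a finite intersection of maximal graded left ideals and is nilpotent, \<open>L / J L\<close>
  is semisimple, so that between \<open>J L\<close> and \<open>L\<close> the descending chain condition implies the
  ascending one, and a minimal graded left ideal \<open>L\<close> violating the ascending chain condition
  cannot exist.\<close>

lemma eventually_const_by_invariants:
  fixes f :: "nat \<Rightarrow> 'b" and g :: "nat \<Rightarrow> 'c" and h :: "nat \<Rightarrow> 'd"
  assumes "\<exists>N. \<forall>k\<ge>N. g k = g N" "\<exists>N. \<forall>k\<ge>N. h k = h N"
    and "\<And>i j. i \<le> j \<Longrightarrow> g i = g j \<Longrightarrow> h i = h j \<Longrightarrow> f i = f j"
  shows "\<exists>N. \<forall>k\<ge>N. f k = f N"
proof -
  obtain N1 N2 where N1: "\<forall>k\<ge>N1. g k = g N1" and N2: "\<forall>k\<ge>N2. h k = h N2"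
    using assms(1,2) by blast
  have "f (max N1 N2) = f k" if "k \<ge> max N1 N2" for k
    using assms(3)[OF that] N1 N2 that by (metis max.boundedE max.cobounded1 max.cobounded2)
  then show ?thesis
    by metis
qed

lemma strict_mono_subchain:
  fixes f :: "nat \<Rightarrow> 'b::order"
  assumes "mono f" "\<not> (\<exists>N. \<forall>k\<ge>N. f k = f N)"
  shows "\<exists>g. (\<forall>k. g k < g (Suc k)) \<and> range g \<subseteq> range f"
proof -
  have "\<exists>k\<ge>N. f k \<noteq> f N" for N
    using assms(2) by blast
  then obtain next_index where next_index: "\<And>N. next_index N \<ge> N \<and> f (next_index N) \<noteq> f N"
    by metis
  define \<sigma> where "\<sigma> n = (next_index ^^ n) 0" for n
  have "f (\<sigma> k) < f (\<sigma> (Suc k))" for k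
  proof -
    have "\<sigma> (Suc k) = next_index (\<sigma> k)"
      by (simp add: \<sigma>_def)
    then show ?thesis
      using next_index[of "\<sigma> k"] monoD[OF assms(1)] by (metis order_less_le)
  qed
  then show ?thesis
    by (intro exI[of _ "f \<circ> \<sigma>"]) auto
qed

section \<open>Homogeneous components\<close>

locale graded_subring =
  fixes G :: "int \<Rightarrow> 'a::ring_1 set" and S :: "'a set"
  assumes graded: "graded_ring G"
    and one_in_S: "1 \<in> S"
    and add_in_S: "x \<in> S \<Longrightarrow> y \<in> S \<Longrightarrow> x + y \<in> S"
    and uminus_in_S: "x \<in> S \<Longrightarrow> - x \<in> S"
    and mult_in_S: "x \<in> S \<Longrightarrow> y \<in> S \<Longrightarrow> x * y \<in> S"
    and decomp_in_S: "a \<in> S \<Longrightarrow> \<exists>c. graded_decomp (\<lambda>n. G n \<inter> S) a c"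
begin

definition homog :: "int \<Rightarrow> 'a set" where
  "homog n = G n \<inter> S"

definition hcomp :: "int \<Rightarrow> 'a \<Rightarrow> 'a" where
  "hcomp n a = (SOME c. graded_decomp homog a c) n"

definition homogeneous :: "'a \<Rightarrow> bool" where
  "homogeneous x \<longleftrightarrow> (\<exists>k. x \<in> homog k)"

lemma G_add: "x \<in> G n \<Longrightarrow> y \<in> G n \<Longrightarrow> x + y \<in> G n"
  and G_uminus: "x \<in> G n \<Longrightarrow> - x \<in> G n"
  and G_mult: "x \<in> G m \<Longrightarrow> y \<in> G n \<Longrightarrow> x * y \<in> G (m + n)"
  and one_in_G0: "1 \<in> G 0"
  and graded_sum_zero: "finite {n. c n \<noteq> 0} \<Longrightarrow> (\<forall>n. c n \<in> G n) \<Longrightarrow>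
      (\<Sum>n | c n \<noteq> 0. c n) = 0 \<Longrightarrow> c n = 0"
  using graded unfolding graded_ring_def by blast+

lemma zero_in_S: "0 \<in> S"
  using add_in_S[OF one_in_S uminus_in_S[OF one_in_S]] by simp

lemma diff_in_S: "x \<in> S \<Longrightarrow> y \<in> S \<Longrightarrow> x - y \<in> S"
  using add_in_S uminus_in_S by (metis diff_conv_add_uminus)

lemma sum_in_S: "finite A \<Longrightarrow> (\<And>i. i \<in> A \<Longrightarrow> f i \<in> S) \<Longrightarrow> sum f A \<in> S"
  by (induction A rule: finite_induct) (auto intro: zero_in_S add_in_S)

lemma homog_0: "0 \<in> homog n"
  using graded zero_in_S unfolding graded_ring_def homog_def by blast

lemma homog_add: "x \<in> homog n \<Longrightarrow> y \<in> homog n \<Longrightarrow> x + y \<in> homog n"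
  and homog_uminus: "x \<in> homog n \<Longrightarrow> - x \<in> homog n"
  and homog_mult: "x \<in> homog m \<Longrightarrow> y \<in> homog n \<Longrightarrow> x * y \<in> homog (m + n)"
  and homog_1: "1 \<in> homog 0"
  and homog_in_S: "x \<in> homog n \<Longrightarrow> x \<in> S"
  and homog_in_G: "x \<in> homog n \<Longrightarrow> x \<in> G n"
  by (simp_all add: homog_def G_add add_in_S G_uminus uminus_in_S G_mult mult_in_S one_in_G0 one_in_S)

lemma homog_diff: "x \<in> homog n \<Longrightarrow> y \<in> homog n \<Longrightarrow> x - y \<in> homog n"
  using homog_add homog_uminus by (metis diff_conv_add_uminus)

lemma graded_components_unique:
  assumes "finite U" "\<And>n. n \<notin> U \<Longrightarrow> c n = 0" "\<And>n. c n \<in> G n"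
    and "finite V" "\<And>n. n \<notin> V \<Longrightarrow> c' n = 0" "\<And>n. c' n \<in> G n"
    and "sum c U = sum c' V"
  shows "c n = c' n"
proof -
  define e where "e n = c n - c' n" for n
  have supp: "{n. e n \<noteq> 0} \<subseteq> U \<union> V"
    using assms(2,5) unfolding e_def by (metis (mono_tags) Un_iff diff_self mem_Collect_eq subsetI)
  have fin: "finite {n. e n \<noteq> 0}"
    using supp assms(1,4) finite_subset by blast
  have e_G: "\<forall>n. e n \<in> G n"
    unfolding e_def diff_conv_add_uminus using G_add[OF assms(3) G_uminus[OF assms(6)]] by blast
  have "sum c U = sum c (U \<union> V)"
    by (intro sum.mono_neutral_left) (simp_all add: assms(1,2,4))
  moreover have "sum c' V = sum c' (U \<union> V)"
    by (intro sum.mono_neutral_left) (simp_all add: assms(1,4,5))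
  ultimately have sum_zero: "sum e (U \<union> V) = 0"
    using assms(7) by (simp add: e_def sum_subtractf)
  have "sum e {n. e n \<noteq> 0} = sum e (U \<union> V)"
    by (intro sum.mono_neutral_left) (simp_all add: supp assms(1,4))
  also have "\<dots> = 0" by (rule sum_zero)
  finally have "e n = 0"
    by (rule graded_sum_zero[OF fin e_G])
  then show ?thesis by (simp add: e_def)
qed

lemma hcomp_decomp: "a \<in> S \<Longrightarrow> graded_decomp homog a (\<lambda>n. hcomp n a)"
  unfolding hcomp_def using decomp_in_S[unfolded homog_def[symmetric]]
  by (metis (no_types) someI_ex)

lemma hcomp_homog: "a \<in> S \<Longrightarrow> hcomp n a \<in> homog n"
  and finite_hcomp_support: "a \<in> S \<Longrightarrow> finite {n. hcomp n a \<noteq> 0}"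
  using hcomp_decomp unfolding graded_decomp_def by blast+

lemma hcomp_in_S: "a \<in> S \<Longrightarrow> hcomp n a \<in> S"
  using hcomp_homog homog_in_S by blast

lemma sum_hcomp:
  assumes "a \<in> S" "finite U" "{n. hcomp n a \<noteq> 0} \<subseteq> U"
  shows "(\<Sum>n\<in>U. hcomp n a) = a"
proof -
  have "(\<Sum>n\<in>U. hcomp n a) = (\<Sum>n | hcomp n a \<noteq> 0. hcomp n a)"
    by (rule sum.mono_neutral_right) (use assms in auto)
  also have "\<dots> = a"
    using hcomp_decomp[OF assms(1)] unfolding graded_decomp_def by simp
  finally show ?thesis .
qed

lemma hcomp_eqI:
  assumes "finite U" "\<And>n. n \<notin> U \<Longrightarrow> c n = 0" "\<And>n. c n \<in> homog n" "a = sum c U"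
  shows "hcomp n a = c n"
proof -
  have a: "a \<in> S"
    using assms(3,4) homog_in_S sum_in_S[OF assms(1)] by metis
  have "(\<Sum>n | hcomp n a \<noteq> 0. hcomp n a) = sum c U"
    using sum_hcomp[OF a finite_hcomp_support[OF a] order_refl] assms(4) by simp
  moreover have "\<And>n. hcomp n a \<in> G n" "\<And>n. c n \<in> G n"
    using hcomp_homog[OF a] assms(3) homog_in_G by blast+
  ultimately show ?thesis
    using graded_components_unique[where c = "\<lambda>n. hcomp n a" and U = "{n. hcomp n a \<noteq> 0}"]
      finite_hcomp_support[OF a] assms(1,2) by blast
qed

lemma hcomp_homog_eq: "x \<in> homog k \<Longrightarrow> hcomp n x = (if n = k then x else 0)"
  by (rule hcomp_eqI[where U = "{k}"]) (auto intro: homog_0)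

lemma hcomp_0: "hcomp n 0 = 0"
  using hcomp_homog_eq[OF homog_0[of 0]] by simp

lemma hcomp_1: "hcomp 0 1 = 1"
  using hcomp_homog_eq[OF homog_1] by simp

lemma hcomp_add:
  assumes "a \<in> S" "b \<in> S"
  shows "hcomp n (a + b) = hcomp n a + hcomp n b"
proof -
  let ?U = "{n. hcomp n a \<noteq> 0} \<union> {n. hcomp n b \<noteq> 0}"
  have fin: "finite ?U"
    using finite_hcomp_support assms by blast
  have "(\<Sum>n\<in>?U. hcomp n a + hcomp n b) = (\<Sum>n\<in>?U. hcomp n a) + (\<Sum>n\<in>?U. hcomp n b)"
    by (rule sum.distrib)
  also have "\<dots> = a + b"
    using sum_hcomp[OF assms(1) fin Un_upper1] sum_hcomp[OF assms(2) fin Un_upper2] by simp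
  finally show ?thesis
    by (intro hcomp_eqI[OF fin]) (use assms hcomp_homog homog_add in auto)
qed

lemma hcomp_mult_homog:
  assumes "a \<in> S" "x \<in> homog k"
  shows "hcomp n (a * x) = hcomp (n - k) a * x"
proof -
  let ?U = "(\<lambda>m. m + k) ` {n. hcomp n a \<noteq> 0}"
  have fin: "finite ?U"
    using finite_hcomp_support[OF assms(1)] by blast
  have "(\<Sum>n\<in>?U. hcomp (n - k) a * x) = (\<Sum>m | hcomp m a \<noteq> 0. hcomp m a * x)"
    by (subst sum.reindex) (auto simp: inj_on_def)
  also have "\<dots> = (\<Sum>m | hcomp m a \<noteq> 0. hcomp m a) * x"
    by (rule sum_distrib_right[symmetric])
  also have "\<dots> = a * x"
    using sum_hcomp[OF assms(1) finite_hcomp_support[OF assms(1)] order_refl] by simp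
  finally show ?thesis
  proof (intro hcomp_eqI[OF fin])
    show "hcomp (n - k) a * x = 0" if "n \<notin> ?U" for n
      using that by (metis (mono_tags) diff_add_cancel image_eqI mem_Collect_eq mult_zero_left)
    show "hcomp (n - k) a * x \<in> homog n" for n
      using homog_mult[OF hcomp_homog[OF assms(1)] assms(2)] by (metis diff_add_cancel)
  qed simp
qed

section \<open>Graded left ideals\<close>

definition left_ideal :: "'a set \<Rightarrow> bool" where
  "left_ideal I \<longleftrightarrow> I \<subseteq> S \<and> 0 \<in> I \<and> (\<forall>x\<in>I. \<forall>y\<in>I. x + y \<in> I) \<and> (\<forall>s\<in>S. \<forall>x\<in>I. s * x \<in> I)"

definition gr_ideal :: "'a set \<Rightarrow> bool" where
  "gr_ideal I \<longleftrightarrow> left_ideal I \<and> (\<forall>a\<in>I. \<forall>n. hcomp n a \<in> I)"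

lemma left_ideal_in_S: "left_ideal I \<Longrightarrow> x \<in> I \<Longrightarrow> x \<in> S"
  and left_ideal_0: "left_ideal I \<Longrightarrow> 0 \<in> I"
  and left_ideal_add: "left_ideal I \<Longrightarrow> x \<in> I \<Longrightarrow> y \<in> I \<Longrightarrow> x + y \<in> I"
  and left_ideal_mult: "left_ideal I \<Longrightarrow> s \<in> S \<Longrightarrow> x \<in> I \<Longrightarrow> s * x \<in> I"
  unfolding left_ideal_def by blast+

lemma left_ideal_uminus: "left_ideal I \<Longrightarrow> x \<in> I \<Longrightarrow> - x \<in> I"
  using left_ideal_mult[of I "- 1" x] uminus_in_S[OF one_in_S] by simp

lemma left_ideal_diff: "left_ideal I \<Longrightarrow> x \<in> I \<Longrightarrow> y \<in> I \<Longrightarrow> x - y \<in> I"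
  using left_ideal_add left_ideal_uminus by (metis diff_conv_add_uminus)

lemma left_ideal_sum:
  assumes "left_ideal I"
  shows "finite A \<Longrightarrow> (\<And>i. i \<in> A \<Longrightarrow> f i \<in> I) \<Longrightarrow> sum f A \<in> I"
  by (induction A rule: finite_induct) (auto intro: left_ideal_0[OF assms] left_ideal_add[OF assms])

lemma gr_ideal_left_ideal: "gr_ideal I \<Longrightarrow> left_ideal I"
  and gr_ideal_hcomp: "gr_ideal I \<Longrightarrow> a \<in> I \<Longrightarrow> hcomp n a \<in> I"
  unfolding gr_ideal_def by blast+

lemma gr_ideal_in_S: "gr_ideal I \<Longrightarrow> I \<subseteq> S"
  using gr_ideal_left_ideal left_ideal_in_S by blast

lemma left_ideal_hcompI:
  assumes "left_ideal I" "a \<in> S" "\<And>n. hcomp n a \<in> I"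
  shows "a \<in> I"
  using left_ideal_sum[OF assms(1) finite_hcomp_support[OF assms(2)]] assms(3)
    sum_hcomp[OF assms(2) finite_hcomp_support[OF assms(2)] order_refl] by metis

lemma graded_left_ideal_iff: "graded_left_ideal G S I \<longleftrightarrow> gr_ideal I"
proof
  assume I: "graded_left_ideal G S I"
  then have "left_ideal I"
    unfolding graded_left_ideal_def left_ideal_def by blast
  moreover have "hcomp n a \<in> I" if "a \<in> I" for a n
    using I that hcomp_decomp[OF left_ideal_in_S[OF \<open>left_ideal I\<close> that]]
    unfolding graded_left_ideal_def homog_def by blast
  ultimately show "gr_ideal I"
    unfolding gr_ideal_def by blast
next
  assume I: "gr_ideal I"
  have "c n \<in> I" if "a \<in> I" "graded_decomp homog a c" for a c n
  proof -
    have "hcomp n a = c n"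
      by (rule hcomp_eqI[where U = "{n. c n \<noteq> 0}"]) (use that(2) in \<open>auto simp: graded_decomp_def\<close>)
    then show ?thesis
      using gr_ideal_hcomp[OF I that(1), of n] by simp
  qed
  then show "graded_left_ideal G S I"
    using I left_ideal_uminus[OF gr_ideal_left_ideal[OF I]]
    unfolding graded_left_ideal_def gr_ideal_def left_ideal_def homog_def by blast
qed

lemma gr_ideal_S: "gr_ideal S"
  unfolding gr_ideal_def left_ideal_def using zero_in_S add_in_S mult_in_S hcomp_in_S by blast

lemma gr_ideal_Int: "gr_ideal A \<Longrightarrow> gr_ideal B \<Longrightarrow> gr_ideal (A \<inter> B)"
  unfolding gr_ideal_def left_ideal_def by blast

lemma gr_ideal_Inter: "(\<And>M. M \<in> \<M> \<Longrightarrow> gr_ideal M) \<Longrightarrow> gr_ideal (S \<inter> \<Inter>\<M>)"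
  unfolding gr_ideal_def left_ideal_def using zero_in_S add_in_S mult_in_S hcomp_in_S by auto

lemma gr_ideal_chain_Union:
  assumes "C \<noteq> {}" "\<And>X Y. X \<in> C \<Longrightarrow> Y \<in> C \<Longrightarrow> X \<subseteq> Y \<or> Y \<subseteq> X"
    and "\<And>X. X \<in> C \<Longrightarrow> gr_ideal X"
  shows "gr_ideal (\<Union>C)"
  unfolding gr_ideal_def left_ideal_def
proof (intro conjI ballI allI)
  show "\<Union>C \<subseteq> S"
    using assms(3) gr_ideal_in_S by blast
  show "0 \<in> \<Union>C"
    using assms(1,3) gr_ideal_left_ideal left_ideal_0 by blast
  show "s * x \<in> \<Union>C" if "s \<in> S" "x \<in> \<Union>C" for s x
    using that assms(3) gr_ideal_left_ideal left_ideal_mult by blast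
  show "hcomp n x \<in> \<Union>C" if "x \<in> \<Union>C" for x n
    using that assms(3) gr_ideal_hcomp by blast
  show "x + y \<in> \<Union>C" if "x \<in> \<Union>C" "y \<in> \<Union>C" for x y
  proof -
    obtain X Y where XY: "X \<in> C" "Y \<in> C" "x \<in> X" "y \<in> Y"
      using \<open>x \<in> \<Union>C\<close> \<open>y \<in> \<Union>C\<close> by blast
    consider "X \<subseteq> Y" | "Y \<subseteq> X"
      using assms(2)[OF XY(1,2)] by blast
    then show ?thesis
    proof cases
      case 1
      then show ?thesis
        using XY left_ideal_add[OF gr_ideal_left_ideal[OF assms(3)[OF XY(2)]]] by blast
    next
      case 2
      then show ?thesis
        using XY left_ideal_add[OF gr_ideal_left_ideal[OF assms(3)[OF XY(1)]]] by blast
    qed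
  qed
qed

lemma left_ideal_plus_subset:
  "left_ideal C \<Longrightarrow> A \<subseteq> C \<Longrightarrow> B \<subseteq> C \<Longrightarrow> A + B \<subseteq> C"
  by (auto elim!: set_plus_elim intro: left_ideal_add)

lemma subset_plus_left:
  fixes A B :: "'a set"
  assumes "0 \<in> B"
  shows "A \<subseteq> A + B"
proof
  fix a
  assume "a \<in> A"
  then have "a + 0 \<in> A + B"
    using assms by (rule set_plus_intro)
  then show "a \<in> A + B"
    by simp
qed

lemma gr_ideal_plus:
  assumes "gr_ideal A" "gr_ideal B"
  shows "gr_ideal (A + B)"
proof -
  have A: "left_ideal A" and B: "left_ideal B"
    using assms gr_ideal_left_ideal by blast+
  have "A + B \<subseteq> S"
    using A B by (auto elim!: set_plus_elim intro: add_in_S dest: left_ideal_in_S)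
  moreover have "0 \<in> A + B"
    using left_ideal_0[OF A] left_ideal_0[OF B] by (metis add_0 set_plus_intro)
  moreover have "x + y \<in> A + B" if xy: "x \<in> A + B" "y \<in> A + B" for x y
  proof -
    obtain a b a' b' where ab: "x = a + b" "y = a' + b'" "a \<in> A" "b \<in> B" "a' \<in> A" "b' \<in> B"
      using xy by (auto elim!: set_plus_elim)
    then have "(a + a') + (b + b') \<in> A + B"
      using left_ideal_add[OF A] left_ideal_add[OF B] by (simp add: set_plus_intro)
    moreover have "x + y = (a + a') + (b + b')"
      using ab(1,2) by (simp add: algebra_simps)
    ultimately show ?thesis
      by simp
  qed
  moreover have "s * x \<in> A + B" "hcomp n x \<in> A + B" if sx: "s \<in> S" "x \<in> A + B" for s x n
  proof -
    obtain a b where ab: "x = a + b" "a \<in> A" "b \<in> B"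
      using sx(2) by (auto elim!: set_plus_elim)
    show "s * x \<in> A + B"
      using ab left_ideal_mult[OF A sx(1)] left_ideal_mult[OF B sx(1)]
      by (simp add: distrib_left set_plus_intro)
    show "hcomp n x \<in> A + B"
      using ab hcomp_add[OF left_ideal_in_S[OF A] left_ideal_in_S[OF B]] gr_ideal_hcomp assms
      by (simp add: set_plus_intro)
  qed
  ultimately show ?thesis
    using one_in_S unfolding gr_ideal_def left_ideal_def by blast
qed

lemma gr_ideal_times_homog:
  assumes "gr_ideal A" "x \<in> homog k"
  shows "gr_ideal (A * {x})"
proof -
  have A: "left_ideal A"
    using assms(1) gr_ideal_left_ideal by blast
  have "A * {x} \<subseteq> S"
    using A homog_in_S[OF assms(2)] by (auto elim!: set_times_elim intro: mult_in_S dest: left_ideal_in_S)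
  moreover have "0 \<in> A * {x}"
    using left_ideal_0[OF A] by (metis mult_zero_left set_times_intro singletonI)
  moreover have "y + z \<in> A * {x}" "s * y \<in> A * {x}" "hcomp n y \<in> A * {x}"
    if yzs: "y \<in> A * {x}" "z \<in> A * {x}" "s \<in> S" for y z s n
  proof -
    obtain a b where ab: "y = a * x" "z = b * x" "a \<in> A" "b \<in> A"
      using yzs(1,2) by (auto elim!: set_times_elim)
    show "y + z \<in> A * {x}"
      using ab left_ideal_add[OF A] by (metis distrib_right set_times_intro singletonI)
    show "s * y \<in> A * {x}"
      using ab left_ideal_mult[OF A yzs(3)] by (metis mult.assoc set_times_intro singletonI)
    show "hcomp n y \<in> A * {x}"
      using ab hcomp_mult_homog[OF left_ideal_in_S[OF A] assms(2)] gr_ideal_hcomp[OF assms(1)]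
      by (metis set_times_intro singletonI)
  qed
  ultimately show ?thesis
    unfolding gr_ideal_def left_ideal_def by (meson zero_in_S)
qed

lemma left_ideal_times_subset: "left_ideal K \<Longrightarrow> A \<subseteq> S \<Longrightarrow> x \<in> K \<Longrightarrow> A * {x} \<subseteq> K"
  by (auto elim!: set_times_elim intro: left_ideal_mult)

lemma mem_S_times: "x \<in> S * {x}"
  using one_in_S by (metis mult_1_left set_times_intro singletonI)

definition colon :: "'a set \<Rightarrow> 'a \<Rightarrow> 'a set" where
  "colon K z = {r \<in> S. r * z \<in> K}"

lemma gr_ideal_colon:
  assumes "gr_ideal K" "z \<in> homog k"
  shows "gr_ideal (colon K z)"
proof -
  have K: "left_ideal K"
    using assms(1) gr_ideal_left_ideal by blast
  have "hcomp n r \<in> colon K z" if "r \<in> colon K z" for r n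
  proof -
    have "r \<in> S" "r * z \<in> K"
      using that unfolding colon_def by auto
    then show ?thesis
      using gr_ideal_hcomp[OF assms(1), of "r * z" "n + k"] hcomp_mult_homog[OF _ assms(2)] hcomp_in_S
      unfolding colon_def by simp
  qed
  moreover have "left_ideal (colon K z)"
    unfolding left_ideal_def colon_def
    using left_ideal_0[OF K] left_ideal_add[OF K] left_ideal_mult[OF K] zero_in_S add_in_S mult_in_S
    by (auto simp: distrib_right mult.assoc)
  ultimately show ?thesis
    unfolding gr_ideal_def by blast
qed

inductive_set ideal_span :: "'a set \<Rightarrow> 'a set" for X where
  ideal_span_zero: "0 \<in> ideal_span X"
| ideal_span_mult: "s \<in> S \<Longrightarrow> x \<in> X \<Longrightarrow> s * x \<in> ideal_span X"
| ideal_span_add: "a \<in> ideal_span X \<Longrightarrow> b \<in> ideal_span X \<Longrightarrow> a + b \<in> ideal_span X"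

lemma ideal_span_base: "x \<in> X \<Longrightarrow> x \<in> ideal_span X"
  using ideal_span_mult[OF one_in_S] by simp

lemma ideal_span_least:
  assumes "left_ideal I" "X \<subseteq> I"
  shows "ideal_span X \<subseteq> I"
proof
  fix a
  assume "a \<in> ideal_span X"
  then show "a \<in> I"
  proof (induction rule: ideal_span.induct)
    case ideal_span_zero
    show ?case using left_ideal_0[OF assms(1)] .
  next
    case (ideal_span_mult s x)
    then show ?case using left_ideal_mult[OF assms(1)] assms(2) by blast
  next
    case (ideal_span_add a b)
    then show ?case using left_ideal_add[OF assms(1)] by blast
  qed
qed

lemma left_ideal_ideal_span:
  assumes "X \<subseteq> S"
  shows "left_ideal (ideal_span X)"
proof -
  have "a \<in> S" if "a \<in> ideal_span X" for a
    using that by induction (use assms in \<open>auto intro: zero_in_S mult_in_S add_in_S\<close>)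
  moreover have "s * a \<in> ideal_span X" if "s \<in> S" "a \<in> ideal_span X" for s a
    using that(2)
  proof induction
    case ideal_span_zero
    show ?case by (simp add: ideal_span.ideal_span_zero)
  next
    case (ideal_span_mult t x)
    then show ?case
      using ideal_span.ideal_span_mult[OF mult_in_S[OF that(1) ideal_span_mult(1)] ideal_span_mult(2)]
      by (simp add: mult.assoc)
  next
    case (ideal_span_add a b)
    then show ?case
      by (simp add: ideal_span.ideal_span_add distrib_left)
  qed
  ultimately show ?thesis
    unfolding left_ideal_def by (intro conjI ballI subsetI) (simp_all add: ideal_span_zero ideal_span_add)
qed

lemma gr_ideal_ideal_span:
  assumes "X \<subseteq> Collect homogeneous"
  shows "gr_ideal (ideal_span X)"
proof -
  have X: "X \<subseteq> S"
    using assms homog_in_S unfolding homogeneous_def by blast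
  have "hcomp n a \<in> ideal_span X" if "a \<in> ideal_span X" for a n
    using that
  proof (induction rule: ideal_span.induct)
    case ideal_span_zero
    show ?case by (simp add: hcomp_0 ideal_span.ideal_span_zero)
  next
    case (ideal_span_mult s x)
    then obtain k where "x \<in> homog k"
      using assms unfolding homogeneous_def by blast
    then show ?case
      using hcomp_mult_homog[OF ideal_span_mult(1)] hcomp_in_S[OF ideal_span_mult(1)] ideal_span_mult(2)
      by (simp add: ideal_span.ideal_span_mult)
  next
    case (ideal_span_add a b)
    have "a \<in> S" "b \<in> S"
      using ideal_span_add(1,2) left_ideal_in_S[OF left_ideal_ideal_span[OF X]] by blast+
    then show ?case
      using ideal_span_add(3,4) by (simp add: hcomp_add ideal_span.ideal_span_add)
  qed
  then show ?thesis
    using left_ideal_ideal_span[OF X] unfolding gr_ideal_def by blast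
qed

lemma ideal_span_mono: "X \<subseteq> Y \<Longrightarrow> ideal_span X \<subseteq> ideal_span Y"
proof
  fix a
  assume "X \<subseteq> Y" "a \<in> ideal_span X"
  then show "a \<in> ideal_span Y"
    by (induction rule: ideal_span.induct[OF \<open>a \<in> ideal_span X\<close>]) (auto intro: ideal_span.intros)
qed

lemma ideal_span_mult_right_zero:
  assumes "\<And>g. g \<in> X \<Longrightarrow> g * z = 0" "u \<in> ideal_span X"
  shows "u * z = 0"
  using assms(2) by (induction rule: ideal_span.induct) (simp_all add: assms(1) mult.assoc distrib_right)

text \<open>Only products of homogeneous elements generate \<open>ideal_prod A B\<close>, so that it is again graded.\<close>

definition ideal_prod :: "'a set \<Rightarrow> 'a set \<Rightarrow> 'a set" where
  "ideal_prod A B = ideal_span {a * b | a b. a \<in> A \<and> b \<in> B \<and> homogeneous a \<and> homogeneous b}"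

lemma gr_ideal_ideal_prod: "gr_ideal (ideal_prod A B)"
  unfolding ideal_prod_def
proof (rule gr_ideal_ideal_span)
  show "{a * b | a b. a \<in> A \<and> b \<in> B \<and> homogeneous a \<and> homogeneous b} \<subseteq> Collect homogeneous"
    using homog_mult unfolding homogeneous_def by blast
qed

lemma ideal_prod_mult_zero:
  assumes "\<And>a b. a \<in> A \<Longrightarrow> b \<in> B \<Longrightarrow> homogeneous a \<Longrightarrow> homogeneous b \<Longrightarrow> a * b * z = 0"
    and "u \<in> ideal_prod A B"
  shows "u * z = 0"
  using ideal_span_mult_right_zero[OF _ assms(2)[unfolded ideal_prod_def]] assms(1) by blast

lemma mult_mem_ideal_prod:
  assumes "gr_ideal A" "gr_ideal B" "a \<in> A" "b \<in> B"
  shows "a * b \<in> ideal_prod A B"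
proof -
  have a: "a \<in> S" and b: "b \<in> S"
    using assms gr_ideal_in_S by blast+
  have P: "left_ideal (ideal_prod A B)"
    using gr_ideal_ideal_prod gr_ideal_left_ideal by blast
  let ?Ua = "{n. hcomp n a \<noteq> 0}" and ?Ub = "{n. hcomp n b \<noteq> 0}"
  have "a * b = (\<Sum>m\<in>?Ua. hcomp m a) * (\<Sum>n\<in>?Ub. hcomp n b)"
    using sum_hcomp[OF a finite_hcomp_support[OF a] order_refl]
      sum_hcomp[OF b finite_hcomp_support[OF b] order_refl] by simp
  also have "\<dots> = (\<Sum>m\<in>?Ua. \<Sum>n\<in>?Ub. hcomp m a * hcomp n b)"
    by (subst sum_distrib_right) (simp add: sum_distrib_left)
  also have "\<dots> \<in> ideal_prod A B"
  proof (intro left_ideal_sum[OF P] finite_hcomp_support a b)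
    fix m n
    have "hcomp m a * hcomp n b \<in> {a * b | a b. a \<in> A \<and> b \<in> B \<and> homogeneous a \<and> homogeneous b}"
      using gr_ideal_hcomp assms hcomp_homog[OF a] hcomp_homog[OF b] unfolding homogeneous_def by blast
    then show "hcomp m a * hcomp n b \<in> ideal_prod A B"
      unfolding ideal_prod_def by (rule ideal_span_base)
  qed
  finally show ?thesis .
qed

lemma ideal_prod_subset: "left_ideal B \<Longrightarrow> A \<subseteq> S \<Longrightarrow> ideal_prod A B \<subseteq> B"
  unfolding ideal_prod_def by (rule ideal_span_least) (auto intro: left_ideal_mult)

lemma ideal_prod_mono: "A \<subseteq> A' \<Longrightarrow> B \<subseteq> B' \<Longrightarrow> ideal_prod A B \<subseteq> ideal_prod A' B'"
  unfolding ideal_prod_def by (rule ideal_span_mono) blast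

lemma ideal_prod_assoc_subset:
  assumes "gr_ideal A" "gr_ideal B" "gr_ideal C"
  shows "ideal_prod A (ideal_prod B C) \<subseteq> ideal_prod (ideal_prod A B) C"
proof -
  let ?T = "ideal_prod (ideal_prod A B) C"
  have T: "left_ideal ?T"
    using gr_ideal_ideal_prod gr_ideal_left_ideal by blast
  have "a * u \<in> ?T" if "a \<in> A" "u \<in> ideal_prod B C" for a u
    using that(2) unfolding ideal_prod_def[of B C]
  proof (induction rule: ideal_span.induct)
    case ideal_span_zero
    show ?case using left_ideal_0[OF T] by simp
  next
    case (ideal_span_mult s g)
    then obtain b c where g: "g = b * c" "b \<in> B" "c \<in> C"
      by blast
    have "s * b \<in> B"
      using left_ideal_mult[OF gr_ideal_left_ideal[OF assms(2)] ideal_span_mult(1) g(2)] .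
    then have "a * (s * b) \<in> ideal_prod A B"
      using mult_mem_ideal_prod[OF assms(1,2) that(1)] by blast
    then have "a * (s * b) * c \<in> ?T"
      using mult_mem_ideal_prod[OF gr_ideal_ideal_prod assms(3) _ g(3)] by blast
    then show ?case
      using g by (simp add: mult.assoc)
  next
    case (ideal_span_add x y)
    then show ?case
      using left_ideal_add[OF T] by (simp add: distrib_left)
  qed
  then show ?thesis
    unfolding ideal_prod_def[of A "ideal_prod B C"]
    by (intro ideal_span_least[OF T]) blast
qed

lemma ideal_prod_zero: "ideal_prod {0} B \<subseteq> {0}"
proof -
  have "left_ideal {0}"
    unfolding left_ideal_def using zero_in_S by auto
  then show ?thesis
    unfolding ideal_prod_def by (rule ideal_span_least) auto
qed

lemma ex_homogeneous_mult_ne_zero: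
  assumes "\<not> ideal_prod A B \<subseteq> {0}"
  obtains a b where "a \<in> A" "b \<in> B" "homogeneous b" "a * b \<noteq> 0"
proof -
  obtain u where u: "u \<in> ideal_prod A B" "u \<noteq> 0"
    using assms by blast
  have "\<exists>a b. a \<in> A \<and> b \<in> B \<and> homogeneous b \<and> a * b \<noteq> 0"
  proof (rule ccontr)
    assume "\<not> ?thesis"
    then have "u * 1 = 0"
      using ideal_prod_mult_zero[OF _ u(1), of 1] by auto
    then show False
      using u(2) by simp
  qed
  then show ?thesis
    using that by blast
qed

lemma ex_mult_mult_ne_zero:
  assumes "a \<in> ideal_prod A B" "a * x \<noteq> 0"
  shows "\<exists>p\<in>A. \<exists>q\<in>B. p * (q * x) \<noteq> 0"
proof (rule ccontr)
  assume "\<not> ?thesis"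
  then have "a * x = 0"
    using ideal_prod_mult_zero[OF _ assms(1), of x] by (auto simp: mult.assoc)
  then show False
    using assms(2) by simp
qed

text \<open>\<open>ideal_power J k\<close> is the power \<open>J\<^sup>k\<^sup>+\<^sup>1\<close>.\<close>

primrec ideal_power :: "'a set \<Rightarrow> nat \<Rightarrow> 'a set" where
  "ideal_power J 0 = J"
| "ideal_power J (Suc k) = ideal_prod J (ideal_power J k)"

lemma gr_ideal_ideal_power: "gr_ideal J \<Longrightarrow> gr_ideal (ideal_power J k)"
  by (cases k) (simp_all add: gr_ideal_ideal_prod)

lemma ideal_power_Suc_subset:
  assumes "gr_ideal J"
  shows "ideal_power J (Suc k) \<subseteq> ideal_power J k"
  using ideal_prod_subset[OF gr_ideal_left_ideal[OF gr_ideal_ideal_power[OF assms]] gr_ideal_in_S[OF assms]]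
  by simp

lemma ideal_power_subset:
  assumes "gr_ideal J"
  shows "ideal_power J k \<subseteq> J"
proof (induction k)
  case (Suc k)
  then show ?case
    using ideal_power_Suc_subset[OF assms, of k] by blast
qed simp

lemma ideal_power_add_subset:
  assumes "gr_ideal J"
  shows "ideal_power J (Suc (a + b)) \<subseteq> ideal_prod (ideal_power J a) (ideal_power J b)"
proof (induction a)
  case 0
  show ?case by simp
next
  case (Suc a)
  have "ideal_power J (Suc (Suc a + b)) = ideal_prod J (ideal_power J (Suc (a + b)))"
    by simp
  also have "\<dots> \<subseteq> ideal_prod J (ideal_prod (ideal_power J a) (ideal_power J b))"
    using ideal_prod_mono Suc by blast
  also have "\<dots> \<subseteq> ideal_prod (ideal_power J (Suc a)) (ideal_power J b)"
    using ideal_prod_assoc_subset[OF assms gr_ideal_ideal_power[OF assms] gr_ideal_ideal_power[OF assms]]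
    by simp
  finally show ?case .
qed

lemma ideal_prod_eq_self_zero:
  assumes "gr_ideal J" "gr_ideal L" "ideal_prod J L = L" "ideal_power J n \<subseteq> {0}"
  shows "L \<subseteq> {0}"
proof -
  have "L \<subseteq> ideal_prod (ideal_power J k) L" for k
  proof (induction k)
    case 0
    show ?case using assms(3) by simp
  next
    case (Suc k)
    have "L = ideal_prod J L"
      using assms(3) by simp
    also have "\<dots> \<subseteq> ideal_prod J (ideal_prod (ideal_power J k) L)"
      using ideal_prod_mono Suc by blast
    also have "\<dots> \<subseteq> ideal_prod (ideal_power J (Suc k)) L"
      using ideal_prod_assoc_subset[OF assms(1) gr_ideal_ideal_power[OF assms(1)] assms(2)] by simp
    finally show ?case .
  qed
  also have "ideal_prod (ideal_power J n) L \<subseteq> ideal_prod {0} L"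
    using ideal_prod_mono assms(4) by blast
  also have "\<dots> \<subseteq> {0}"
    by (rule ideal_prod_zero)
  finally show ?thesis .
qed

definition maximal_gr_ideal :: "'a set \<Rightarrow> bool" where
  "maximal_gr_ideal M \<longleftrightarrow>
     gr_ideal M \<and> 1 \<notin> M \<and> (\<forall>M'. gr_ideal M' \<and> M \<subseteq> M' \<and> 1 \<notin> M' \<longrightarrow> M' = M)"

lemma maximal_gr_ideal_gr_ideal: "maximal_gr_ideal M \<Longrightarrow> gr_ideal M"
  and maximal_gr_ideal_one: "maximal_gr_ideal M \<Longrightarrow> 1 \<notin> M"
  and maximal_gr_ideal_grow: "maximal_gr_ideal M \<Longrightarrow> gr_ideal M' \<Longrightarrow> M \<subset> M' \<Longrightarrow> 1 \<in> M'"
  unfolding maximal_gr_ideal_def by blast+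

lemma maximal_gr_ideal_left_ideal: "maximal_gr_ideal M \<Longrightarrow> left_ideal M"
  using maximal_gr_ideal_gr_ideal gr_ideal_left_ideal by blast

lemma ex_maximal_gr_ideal:
  assumes "gr_ideal I" "1 \<notin> I"
  shows "\<exists>M. maximal_gr_ideal M \<and> I \<subseteq> M"
proof -
  let ?A = "{M. gr_ideal M \<and> I \<subseteq> M \<and> 1 \<notin> M}"
  have "\<Union>C \<in> ?A" if "C \<noteq> {}" "subset.chain ?A C" for C
    using that gr_ideal_chain_Union[of C] unfolding subset_chain_def by blast
  then obtain M where "M \<in> ?A" "\<forall>X\<in>?A. M \<subseteq> X \<longrightarrow> X = M"
    using subset_Zorn_nonempty[of ?A] assms by blast
  then show ?thesis
    unfolding maximal_gr_ideal_def by blast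
qed

lemma ex_separating_element:
  assumes "maximal_gr_ideal M" "gr_ideal Q" "\<not> Q \<subseteq> M"
  obtains e where "e \<in> homog 0" "1 - e \<in> M" "e \<in> Q"
proof -
  have M: "gr_ideal M"
    using assms(1) maximal_gr_ideal_gr_ideal by blast
  have "M \<subset> M + Q"
    using subset_plus_left[OF left_ideal_0[OF gr_ideal_left_ideal[OF assms(2)]]]
      set_zero_plus2[OF left_ideal_0[OF gr_ideal_left_ideal[OF M]]] assms(3) by blast
  then have "1 \<in> M + Q"
    using maximal_gr_ideal_grow[OF assms(1) gr_ideal_plus[OF M assms(2)]] by blast
  then obtain m q where mq: "1 = m + q" "m \<in> M" "q \<in> Q"
    by (rule set_plus_elim)
  have m: "m \<in> S" and q: "q \<in> S"
    using mq(2,3) gr_ideal_in_S M assms(2) by blast+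
  have "1 = hcomp 0 m + hcomp 0 q"
    using hcomp_add[OF m q, of 0] mq(1) hcomp_1 by simp
  then have "1 - hcomp 0 q = hcomp 0 m"
    by (simp add: algebra_simps)
  then show ?thesis
    using that[of "hcomp 0 q"] hcomp_homog[OF q] gr_ideal_hcomp[OF M mq(2)] gr_ideal_hcomp[OF assms(2) mq(3)]
    by simp
qed

lemma ex_irredundant_Inter:
  assumes "finite Ms0" "\<And>M. M \<in> Ms0 \<Longrightarrow> maximal_gr_ideal M"
  shows "\<exists>Ms. finite Ms \<and> (\<forall>M\<in>Ms. maximal_gr_ideal M) \<and> S \<inter> \<Inter>Ms = S \<inter> \<Inter>Ms0 \<and>
    (\<forall>M\<in>Ms. \<not> S \<inter> \<Inter>(Ms - {M}) \<subseteq> M)"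
proof -
  let ?P = "\<lambda>Ms. finite Ms \<and> (\<forall>M\<in>Ms. maximal_gr_ideal M) \<and> S \<inter> \<Inter>Ms = S \<inter> \<Inter>Ms0"
  have "?P Ms0"
    using assms by blast
  then obtain Ms where "?P Ms \<and> (\<forall>Ms'. ?P Ms' \<longrightarrow> card Ms \<le> card Ms')"
    by (rule ex_has_least_nat[THEN exE])
  then have Ms: "?P Ms" and least: "\<And>Ms'. ?P Ms' \<Longrightarrow> card Ms \<le> card Ms'"
    by simp_all
  have "\<not> S \<inter> \<Inter>(Ms - {M}) \<subseteq> M" if "M \<in> Ms" for M
  proof
    assume "S \<inter> \<Inter>(Ms - {M}) \<subseteq> M"
    then have "?P (Ms - {M})"
      using Ms that by auto
    then have "card Ms \<le> card (Ms - {M})"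
      by (rule least)
    moreover have "card (Ms - {M}) < card Ms"
      using Ms that by (meson card_Diff1_less)
    ultimately show False
      by simp
  qed
  then show ?thesis
    using Ms by blast
qed

lemma left_ideal_eq_by_Int_plus:
  fixes C :: "'a set"
  assumes "left_ideal I" "left_ideal I'" "0 \<in> C" "I \<subseteq> I'"
    and "I \<inter> C = I' \<inter> C" "I + C = I' + C"
  shows "I = I'"
proof
  show "I' \<subseteq> I"
  proof
    fix x
    assume x: "x \<in> I'"
    have "x \<in> I + C"
      using set_plus_intro[OF x assms(3)] assms(6) by simp
    then obtain y c where yc: "x = y + c" "y \<in> I" "c \<in> C"
      by (rule set_plus_elim)
    have "c = x - y"
      using yc(1) by simp
    then have "c \<in> I' \<inter> C"
      using left_ideal_diff[OF assms(2) x] yc(2,3) assms(4) by blast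
    then have "c \<in> I"
      using assms(5) by blast
    then show "x \<in> I"
      using yc left_ideal_add[OF assms(1)] by blast
  qed
qed (rule assms(4))

definition noetherian_between :: "'a set \<Rightarrow> 'a set \<Rightarrow> bool" where
  "noetherian_between B L \<longleftrightarrow>
     (\<forall>f. (\<forall>k. gr_ideal (f k) \<and> B \<subseteq> f k \<and> f k \<subseteq> L) \<and> (\<forall>k. f k \<subseteq> f (Suc k))
        \<longrightarrow> (\<exists>N. \<forall>k\<ge>N. f k = f N))"

lemma noetherian_betweenD:
  "noetherian_between B L \<Longrightarrow> (\<And>k. gr_ideal (f k)) \<Longrightarrow> (\<And>k. B \<subseteq> f k) \<Longrightarrow> (\<And>k. f k \<subseteq> L)
    \<Longrightarrow> (\<And>k. f k \<subseteq> f (Suc k)) \<Longrightarrow> \<exists>N. \<forall>k\<ge>N. f k = f N"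
  unfolding noetherian_between_def by blast

lemma noetherian_between_trans:
  assumes "gr_ideal C" "gr_ideal L" "B \<subseteq> C" "C \<subseteq> L"
    and "noetherian_between B C" "noetherian_between C L"
  shows "noetherian_between B L"
  unfolding noetherian_between_def
proof (intro allI impI, elim conjE)
  fix f :: "nat \<Rightarrow> 'a set"
  assume f: "\<forall>k. gr_ideal (f k) \<and> B \<subseteq> f k \<and> f k \<subseteq> L" and inc: "\<forall>k. f k \<subseteq> f (Suc k)"
  have f_ideal: "gr_ideal (f k)" for k
    using f by blast
  have C: "left_ideal C"
    using assms(1) gr_ideal_left_ideal by blast
  have "\<exists>N. \<forall>k\<ge>N. f k \<inter> C = f N \<inter> C"
    using noetherian_betweenD[OF assms(5), of "\<lambda>k. f k \<inter> C"] f inc assms(3)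
      gr_ideal_Int[OF f_ideal assms(1)] by blast
  moreover have "\<exists>N. \<forall>k\<ge>N. f k + C = f N + C"
  proof (rule noetherian_betweenD[OF assms(6)])
    show "gr_ideal (f k + C)" for k
      using gr_ideal_plus[OF f_ideal assms(1)] .
    show "C \<subseteq> f k + C" for k
      using set_zero_plus2[OF left_ideal_0[OF gr_ideal_left_ideal[OF f_ideal]]] .
    show "f k + C \<subseteq> L" for k
      using left_ideal_plus_subset[OF gr_ideal_left_ideal[OF assms(2)]] f assms(4) by blast
    show "f k + C \<subseteq> f (Suc k) + C" for k
      using inc by (simp add: set_plus_mono2)
  qed
  moreover have "f i = f j" if "i \<le> j" "f i \<inter> C = f j \<inter> C" "f i + C = f j + C" for i j
    using left_ideal_eq_by_Int_plus[OF gr_ideal_left_ideal[OF f_ideal] gr_ideal_left_ideal[OF f_ideal]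
        left_ideal_0[OF C] lift_Suc_mono_le[of f, OF _ that(1)]] inc that(2,3) by blast
  ultimately show "\<exists>N. \<forall>k\<ge>N. f k = f N"
    by (rule eventually_const_by_invariants)
qed

lemma noetherian_between_zero:
  assumes "L \<subseteq> {0}"
  shows "noetherian_between B L"
  unfolding noetherian_between_def
proof (intro allI impI, elim conjE)
  fix f :: "nat \<Rightarrow> 'a set"
  assume "\<forall>k. gr_ideal (f k) \<and> B \<subseteq> f k \<and> f k \<subseteq> L"
  then have "f k = {0}" for k
    using assms left_ideal_0[OF gr_ideal_left_ideal] by blast
  then show "\<exists>N. \<forall>k\<ge>N. f k = f N"
    by simp
qed

lemma not_noetherian_between_strict_chain:
  assumes "\<not> noetherian_between B L"
  shows "\<exists>K. (\<forall>k. gr_ideal (K k) \<and> B \<subseteq> K k \<and> K k \<subseteq> L) \<and> (\<forall>k. K k \<subset> K (Suc k))"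
proof -
  obtain f where f: "\<forall>k. gr_ideal (f k) \<and> B \<subseteq> f k \<and> f k \<subseteq> L" and inc: "\<forall>k. f k \<subseteq> f (Suc k)"
    and "\<not> (\<exists>N. \<forall>k\<ge>N. f k = f N)"
    using assms unfolding noetherian_between_def by blast
  moreover have "mono f"
    using inc by (simp add: mono_iff_le_Suc)
  ultimately obtain g where g: "\<forall>k. g k \<subset> g (Suc k)" "range g \<subseteq> range f"
    using strict_mono_subchain[of f] by blast
  have "gr_ideal (g k) \<and> B \<subseteq> g k \<and> g k \<subseteq> L" for k
  proof -
    obtain i where "g k = f i"
      using g(2) by (metis rangeE rangeI subsetD)
    then show ?thesis
      using f by simp
  qed
  then show ?thesis
    using g(1) by blast
qed

end

section \<open>Graded Artinian rings are graded Noetherian\<close>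

locale artinian_graded_subring = graded_subring +
  assumes artinian: "graded_artinian G S"
begin

lemma dcc:
  "(\<And>k. gr_ideal (f k)) \<Longrightarrow> (\<And>k. f (Suc k) \<subseteq> f k) \<Longrightarrow> \<exists>N. \<forall>k\<ge>N. f k = f N"
  using artinian unfolding graded_artinian_def graded_left_ideal_iff by blast

lemma ex_minimal_gr_ideal:
  assumes "X \<in> \<F>" "\<And>X. X \<in> \<F> \<Longrightarrow> gr_ideal X"
  obtains K where "K \<in> \<F>" "\<And>K'. K' \<in> \<F> \<Longrightarrow> K' \<subseteq> K \<Longrightarrow> K' = K"
proof (rule ccontr)
  assume "\<not> thesis"
  then have "\<forall>K\<in>\<F>. \<exists>K'. K' \<in> \<F> \<and> K' \<subset> K"
    using that by blast
  then obtain smaller where smaller: "\<And>K. K \<in> \<F> \<Longrightarrow> smaller K \<in> \<F> \<and> smaller K \<subset> K"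
    by metis
  define chain where "chain k = (smaller ^^ k) X" for k
  have chain_in: "chain k \<in> \<F>" for k
    by (induction k) (auto simp: chain_def assms(1) smaller)
  have chain_Suc: "chain (Suc k) = smaller (chain k)" for k
    by (simp add: chain_def)
  have "\<exists>N. \<forall>k\<ge>N. chain k = chain N"
  proof (rule dcc)
    show "gr_ideal (chain k)" for k
      using assms(2) chain_in by blast
    show "chain (Suc k) \<subseteq> chain k" for k
      using chain_Suc smaller[OF chain_in] by auto
  qed
  then obtain N where "\<forall>k\<ge>N. chain k = chain N"
    by blast
  then have "chain (Suc N) = chain N"
    using le_SucI by blast
  then show False
    using smaller[OF chain_in[of N]] chain_Suc by simp
qed

text \<open>The Artinian form of Nakayama's lemma: a nonzero idempotent graded ideal would contain a
  homogeneous \<open>x \<noteq> 0\<close> with \<open>m * x = x\<close> for some \<open>m \<in> N\<close>, found through a minimal graded ideal \<open>K\<close>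
  with \<open>N K \<noteq> 0\<close>, which must then be \<open>N x\<close>.\<close>

lemma idempotent_gr_ideal_zero:
  assumes N: "gr_ideal N" and idem: "N \<subseteq> ideal_prod N N"
    and fixed_zero: "\<And>m x k. m \<in> N \<Longrightarrow> x \<in> homog k \<Longrightarrow> m * x = x \<Longrightarrow> x = 0"
  shows "N \<subseteq> {0}"
proof (rule ccontr)
  assume "\<not> N \<subseteq> {0}"
  then obtain n0 where n0: "n0 \<in> N" "n0 \<noteq> 0"
    by blast
  let ?F = "{K. gr_ideal K \<and> \<not> ideal_prod N K \<subseteq> {0}}"
  have "n0 * 1 \<in> ideal_prod N S"
    using mult_mem_ideal_prod[OF N gr_ideal_S n0(1) one_in_S] .
  then have "S \<in> ?F"
    using gr_ideal_S n0(2) by auto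
  then obtain K where K: "K \<in> ?F" and K_min: "\<And>K'. K' \<in> ?F \<Longrightarrow> K' \<subseteq> K \<Longrightarrow> K' = K"
  proof (rule ex_minimal_gr_ideal)
    show "gr_ideal X" if "X \<in> ?F" for X
      using that by blast
  qed (rule that)
  then obtain a x where ax: "a \<in> N" "x \<in> K" "homogeneous x" "a * x \<noteq> 0"
    using ex_homogeneous_mult_ne_zero by blast
  then obtain k where x: "x \<in> homog k"
    unfolding homogeneous_def by blast
  have "left_ideal K"
    using K gr_ideal_left_ideal by blast
  then have "N * {x} \<subseteq> K"
    using left_ideal_times_subset[OF _ gr_ideal_in_S[OF N] ax(2)] by blast
  moreover obtain p q where pq: "p \<in> N" "q \<in> N" "p * (q * x) \<noteq> 0"
    using ex_mult_mult_ne_zero[OF subsetD[OF idem ax(1)] ax(4)] by blast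
  then have "N * {x} \<in> ?F"
    using gr_ideal_times_homog[OF N x] mult_mem_ideal_prod[OF N _ pq(1), of "N * {x}" "q * x"]
    by (auto intro: set_times_intro)
  ultimately have "N * {x} = K"
    using K_min by blast
  then obtain m where "m \<in> N" "x = m * x"
    using ax(2) by (auto elim!: set_times_elim)
  then have "x = 0"
    using fixed_zero x by metis
  then show False
    using ax(4) by simp
qed

end

text \<open>Since \<open>A n \<subseteq> K (n + 1)\<close> but \<open>A n \<inter> K n \<subseteq> B\<close>, the \<open>A n\<close> are independent modulo \<open>B\<close>, and the
  tail sums \<open>B + A n + A (n + 1) + \<dots>\<close> form a strictly decreasing chain.\<close>

locale independent_chain = graded_subring +
  fixes B :: "'a set" and K A :: "nat \<Rightarrow> 'a set"
  assumes gr_ideal_B: "gr_ideal B"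
    and left_ideal_K: "left_ideal (K n)"
    and K_mono: "K n \<subseteq> K (Suc n)"
    and B_subset_K: "B \<subseteq> K n"
    and gr_ideal_A: "gr_ideal (A n)"
    and B_subset_A: "B \<subseteq> A n"
    and A_subset_K: "A n \<subseteq> K (Suc n)"
    and A_not_subset_K: "\<not> A n \<subseteq> K n"
    and A_Int_K: "A n \<inter> K n \<subseteq> B"
begin

primrec segment_sum :: "nat \<Rightarrow> nat \<Rightarrow> 'a set" where
  "segment_sum n 0 = B"
| "segment_sum n (Suc p) = segment_sum n p + A (n + p)"

definition tail_sum :: "nat \<Rightarrow> 'a set" where
  "tail_sum n = (\<Union>p. segment_sum n p)"

lemma gr_ideal_segment_sum: "gr_ideal (segment_sum n p)"
  by (induction p) (simp_all add: gr_ideal_B gr_ideal_plus gr_ideal_A)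

lemma segment_sum_Suc: "segment_sum n p \<subseteq> segment_sum n (Suc p)"
  using subset_plus_left[OF left_ideal_0[OF gr_ideal_left_ideal[OF gr_ideal_A]]] by simp

lemma segment_sum_mono: "p \<le> q \<Longrightarrow> segment_sum n p \<subseteq> segment_sum n q"
  using lift_Suc_mono_le[of "segment_sum n", OF segment_sum_Suc] .

lemma segment_sum_subset_K: "segment_sum n p \<subseteq> K (n + p)"
proof (induction p)
  case 0
  show ?case using B_subset_K by simp
next
  case (Suc p)
  have "segment_sum n p \<subseteq> K (n + Suc p)"
    using Suc K_mono[of "n + p"] by auto
  moreover have "A (n + p) \<subseteq> K (n + Suc p)"
    using A_subset_K[of "n + p"] by simp
  ultimately show ?case
    using left_ideal_plus_subset[OF left_ideal_K] by simp
qed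

lemma segment_sum_shift: "segment_sum (Suc n) p \<subseteq> segment_sum n (Suc p)"
proof (induction p)
  case 0
  show ?case
    using set_zero_plus2[OF left_ideal_0[OF gr_ideal_left_ideal[OF gr_ideal_B]]] B_subset_A
      segment_sum_Suc[of n 0] by auto
next
  case (Suc p)
  then show ?case
    using set_plus_mono2[OF Suc order_refl, of "A (Suc n + p)"] by simp
qed

lemma A_Int_segment_sum: "A n \<inter> segment_sum (Suc n) p \<subseteq> B"
proof (induction p)
  case 0
  show ?case by simp
next
  case (Suc p)
  show ?case
  proof
    fix y
    assume y: "y \<in> A n \<inter> segment_sum (Suc n) (Suc p)"
    then obtain s t where st: "y = s + t" "s \<in> segment_sum (Suc n) p" "t \<in> A (Suc n + p)"
      by (auto elim!: set_plus_elim)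
    have K: "left_ideal (K (Suc n + p))"
      by (rule left_ideal_K)
    have "y \<in> K (Suc n + p)"
      using y A_subset_K[of n] lift_Suc_mono_le[of K, OF K_mono, of "Suc n" "Suc n + p"] by auto
    moreover have "s \<in> K (Suc n + p)"
      using st(2) segment_sum_subset_K by blast
    ultimately have "t \<in> K (Suc n + p)"
      using left_ideal_diff[OF K] st(1) by (metis add_diff_cancel_left')
    then have t: "t \<in> B"
      using A_Int_K st(3) by blast
    then have "s \<in> A n"
      using left_ideal_diff[OF gr_ideal_left_ideal[OF gr_ideal_A], of y n t] y B_subset_A st(1) by auto
    then have "s \<in> B"
      using Suc st(2) by blast
    then show "y \<in> B"
      using st(1) t left_ideal_add[OF gr_ideal_left_ideal[OF gr_ideal_B]] by blast
  qed
qed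

lemma gr_ideal_tail_sum: "gr_ideal (tail_sum n)"
  unfolding tail_sum_def
proof (rule gr_ideal_chain_Union)
  show "X \<subseteq> Y \<or> Y \<subseteq> X" if "X \<in> range (segment_sum n)" "Y \<in> range (segment_sum n)" for X Y
    using that segment_sum_mono nat_le_linear by blast
qed (use gr_ideal_segment_sum in auto)

lemma tail_sum_Suc_psubset: "tail_sum (Suc n) \<subset> tail_sum n"
proof
  show "tail_sum (Suc n) \<subseteq> tail_sum n"
    unfolding tail_sum_def using segment_sum_shift by blast
  have "A n \<subseteq> segment_sum n 1"
    using set_zero_plus2[OF left_ideal_0[OF gr_ideal_left_ideal[OF gr_ideal_B]]] by simp
  then have "A n \<subseteq> tail_sum n"
    unfolding tail_sum_def by blast
  moreover have "\<not> A n \<subseteq> tail_sum (Suc n)"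
    using A_Int_segment_sum A_not_subset_K B_subset_K unfolding tail_sum_def by blast
  ultimately show "tail_sum (Suc n) \<noteq> tail_sum n"
    by blast
qed

end

context artinian_graded_subring
begin

lemma no_independent_chain: "\<not> independent_chain G S B K A"
proof
  assume "independent_chain G S B K A"
  then interpret independent_chain G S B K A .
  obtain N where "\<forall>k\<ge>N. tail_sum k = tail_sum N"
    using dcc[of tail_sum] gr_ideal_tail_sum tail_sum_Suc_psubset by blast
  then have "tail_sum (Suc N) = tail_sum N"
    using le_SucI by blast
  then show False
    using tail_sum_Suc_psubset[of N] by simp
qed

end

text \<open>\<open>J\<close> is the graded Jacobson radical, the intersection of the finitely many maximal graded
  left ideals in \<open>Ms\<close>, and the \<open>e M\<close> are Chinese-remainder elements:
  \<open>e M \<equiv> 1\<close> modulo \<open>M\<close> and \<open>e M \<equiv> 0\<close> modulo the other members of \<open>Ms\<close>.\<close>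

locale graded_radical = artinian_graded_subring +
  fixes J :: "'a set" and Ms :: "'a set set" and e :: "'a set \<Rightarrow> 'a"
  assumes finite_Ms: "finite Ms"
    and maximal_Ms: "M \<in> Ms \<Longrightarrow> maximal_gr_ideal M"
    and J_eq: "J = S \<inter> \<Inter>Ms"
    and J_subset_maximal: "maximal_gr_ideal M \<Longrightarrow> J \<subseteq> M"
    and e_homog: "M \<in> Ms \<Longrightarrow> e M \<in> homog 0"
    and one_minus_e: "M \<in> Ms \<Longrightarrow> 1 - e M \<in> M"
    and e_in_others: "M \<in> Ms \<Longrightarrow> M' \<in> Ms \<Longrightarrow> M' \<noteq> M \<Longrightarrow> e M \<in> M'"

context artinian_graded_subring
begin

lemma ex_Inter_maximal_subset_maximal:
  obtains Ms where "finite Ms" "\<And>M. M \<in> Ms \<Longrightarrow> maximal_gr_ideal M"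
    "\<And>M. maximal_gr_ideal M \<Longrightarrow> S \<inter> \<Inter>Ms \<subseteq> M"
proof -
  let ?F = "{S \<inter> \<Inter>Ms | Ms. finite Ms \<and> (\<forall>M\<in>Ms. maximal_gr_ideal M)}"
  have "S \<in> ?F"
    by (rule CollectI, rule exI[of _ "{}"]) simp
  then obtain J where J: "J \<in> ?F" and J_min: "\<And>Y. Y \<in> ?F \<Longrightarrow> Y \<subseteq> J \<Longrightarrow> Y = J"
  proof (rule ex_minimal_gr_ideal)
    show "gr_ideal X" if "X \<in> ?F" for X
      using that gr_ideal_Inter maximal_gr_ideal_gr_ideal by blast
  qed (rule that)
  then obtain Ms where Ms: "finite Ms" "\<forall>M\<in>Ms. maximal_gr_ideal M" "J = S \<inter> \<Inter>Ms"
    by blast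
  have "J \<subseteq> M" if "maximal_gr_ideal M" for M
  proof -
    have "S \<inter> \<Inter>(insert M Ms) \<in> ?F"
      using Ms that by blast
    moreover have "S \<inter> \<Inter>(insert M Ms) \<subseteq> J"
      using Ms by auto
    ultimately have "S \<inter> \<Inter>(insert M Ms) = J"
      by (rule J_min)
    then show ?thesis
      by auto
  qed
  then show ?thesis
    using that Ms by blast
qed

lemma ex_graded_radical: "\<exists>J Ms e. graded_radical G S J Ms e"
proof -
  obtain Ms0 where Ms0: "finite Ms0" "\<And>M. M \<in> Ms0 \<Longrightarrow> maximal_gr_ideal M"
      "\<And>M. maximal_gr_ideal M \<Longrightarrow> S \<inter> \<Inter>Ms0 \<subseteq> M"
    using ex_Inter_maximal_subset_maximal by blast
  obtain Ms where Ms: "finite Ms" "\<forall>M\<in>Ms. maximal_gr_ideal M" "S \<inter> \<Inter>Ms = S \<inter> \<Inter>Ms0"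
    and irredundant: "\<forall>M\<in>Ms. \<not> S \<inter> \<Inter>(Ms - {M}) \<subseteq> M"
    using ex_irredundant_Inter[OF Ms0(1,2)] by blast
  have "\<exists>e. e \<in> homog 0 \<and> 1 - e \<in> M \<and> e \<in> S \<inter> \<Inter>(Ms - {M})" if "M \<in> Ms" for M
  proof -
    have "gr_ideal (S \<inter> \<Inter>(Ms - {M}))"
      using Ms maximal_gr_ideal_gr_ideal by (intro gr_ideal_Inter) blast
    then show ?thesis
      using ex_separating_element[OF _ _ irredundant[rule_format, OF that]] Ms that by metis
  qed
  then obtain e where e: "\<And>M. M \<in> Ms \<Longrightarrow> e M \<in> homog 0 \<and> 1 - e M \<in> M \<and> e M \<in> S \<inter> \<Inter>(Ms - {M})"
    by metis
  have "graded_radical G S (S \<inter> \<Inter>Ms) Ms e"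
    using Ms Ms0(3) e by unfold_locales (auto simp: graded_radical_axioms_def)
  then show ?thesis
    by blast
qed

end

context graded_radical
begin

lemma gr_ideal_J: "gr_ideal J"
  using J_eq gr_ideal_Inter maximal_Ms maximal_gr_ideal_gr_ideal by simp

lemma radical_cancel:
  assumes "j \<in> J" "j \<in> homog 0" "x \<in> S" "(1 - j) * x = 0"
  shows "x = 0"
proof (cases "1 \<in> S * {1 - j}")
  case True
  then obtain v where "1 = v * (1 - j)"
    by (auto elim!: set_times_elim)
  then have "x = v * ((1 - j) * x)"
    by (simp add: mult.assoc[symmetric])
  then show ?thesis
    using assms(4) by simp
next
  case False
  have "gr_ideal (S * {1 - j})"
    using gr_ideal_times_homog[OF gr_ideal_S homog_diff[OF homog_1 assms(2)]] .
  then obtain M where M: "maximal_gr_ideal M" "S * {1 - j} \<subseteq> M"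
    using ex_maximal_gr_ideal False by blast
  have "1 - j \<in> M" "j \<in> M"
    using M mem_S_times J_subset_maximal assms(1) by blast+
  then have "1 - j + j \<in> M"
    using left_ideal_add[OF maximal_gr_ideal_left_ideal[OF M(1)]] by blast
  then show ?thesis
    using maximal_gr_ideal_one[OF M(1)] by simp
qed

lemma homog_fixed_by_J_zero:
  assumes "m \<in> J" "x \<in> homog k" "m * x = x"
  shows "x = 0"
proof -
  have m: "m \<in> S"
    using assms(1) gr_ideal_in_S[OF gr_ideal_J] by blast
  have "x = hcomp k x"
    using hcomp_homog_eq[OF assms(2)] by simp
  also have "\<dots> = hcomp 0 m * x"
    using hcomp_mult_homog[OF m assms(2), of k] assms(3) by simp
  finally have "(1 - hcomp 0 m) * x = 0"
    by (simp add: algebra_simps)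
  then show ?thesis
    using radical_cancel gr_ideal_hcomp[OF gr_ideal_J assms(1)] hcomp_homog[OF m] homog_in_S[OF assms(2)]
    by blast
qed

lemma radical_nilpotent: "\<exists>n. ideal_power J n \<subseteq> {0}"
proof -
  obtain n where n: "\<forall>k\<ge>n. ideal_power J k = ideal_power J n"
    using dcc[of "ideal_power J"] gr_ideal_ideal_power[OF gr_ideal_J] ideal_power_Suc_subset[OF gr_ideal_J]
    by blast
  let ?N = "ideal_power J n"
  have "?N = ideal_power J (Suc (n + n))"
    using n[rule_format, of "Suc (n + n)"] by (simp del: ideal_power.simps)
  also have "\<dots> \<subseteq> ideal_prod ?N ?N"
    by (rule ideal_power_add_subset[OF gr_ideal_J])
  finally have "?N \<subseteq> {0}"
    using idempotent_gr_ideal_zero[OF gr_ideal_ideal_power[OF gr_ideal_J]] homog_fixed_by_J_zero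
      ideal_power_subset[OF gr_ideal_J] by blast
  then show ?thesis
    by blast
qed

lemma e_in_S: "M \<in> Ms \<Longrightarrow> e M \<in> S"
  using e_homog homog_in_S by blast

lemma one_minus_sum_e_in_J: "1 - (\<Sum>M\<in>Ms. e M) \<in> J"
proof -
  have "1 - (\<Sum>M\<in>Ms. e M) \<in> M" if "M \<in> Ms" for M
  proof -
    have M: "left_ideal M"
      using maximal_Ms[OF that] maximal_gr_ideal_left_ideal by blast
    have eq: "1 - (\<Sum>M\<in>Ms. e M) = (1 - e M) - (\<Sum>M'\<in>Ms - {M}. e M')"
      using sum.remove[OF finite_Ms that, of e] by (simp add: algebra_simps)
    have "(\<Sum>M'\<in>Ms - {M}. e M') \<in> M"
      using left_ideal_sum[OF M] finite_Ms e_in_others[OF _ that] by blast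
    then show ?thesis
      unfolding eq by (rule left_ideal_diff[OF M one_minus_e[OF that]])
  qed
  moreover have "1 - (\<Sum>M\<in>Ms. e M) \<in> S"
    using diff_in_S[OF one_in_S sum_in_S[OF finite_Ms e_in_S]] .
  ultimately show ?thesis
    using J_eq by blast
qed

lemma mult_e_in_J:
  assumes "M \<in> Ms" "r \<in> M"
  shows "r * e M \<in> J"
proof -
  have M: "left_ideal M'" if "M' \<in> Ms" for M'
    using maximal_Ms[OF that] maximal_gr_ideal_left_ideal by blast
  have r: "r \<in> S"
    using left_ideal_in_S[OF M[OF assms(1)] assms(2)] .
  have "r * e M \<in> M'" if "M' \<in> Ms" for M'
  proof (cases "M' = M")
    case True
    have "r * (1 - e M) \<in> M"
      using left_ideal_mult[OF M[OF assms(1)] r one_minus_e[OF assms(1)]] .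
    then have "r - r * (1 - e M) \<in> M"
      using left_ideal_diff[OF M[OF assms(1)] assms(2)] by blast
    then show ?thesis
      using True by (simp add: algebra_simps)
  next
    case False
    then show ?thesis
      using left_ideal_mult[OF M[OF that] r e_in_others[OF assms(1) that]] by blast
  qed
  then show ?thesis
    using J_eq mult_in_S[OF r e_in_S[OF assms(1)]] by blast
qed

lemma ex_homog_e_mult_notin:
  assumes "gr_ideal K" "gr_ideal K'" "gr_ideal L" "ideal_prod J L \<subseteq> K" "K' \<subseteq> L" "\<not> K' \<subseteq> K"
  shows "\<exists>y k M. y \<in> homog k \<and> y \<in> K' \<and> M \<in> Ms \<and> e M * y \<notin> K"
proof (rule ccontr)
  assume none: "\<not> ?thesis"
  have K: "left_ideal K"
    using assms(1) gr_ideal_left_ideal by blast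
  have homog_in_K: "y \<in> K" if y: "y \<in> homog k" "y \<in> K'" for y k
  proof -
    have "y = (1 - (\<Sum>M\<in>Ms. e M)) * y + (\<Sum>M\<in>Ms. e M * y)"
      by (simp add: sum_distrib_right[symmetric] algebra_simps)
    moreover have "(1 - (\<Sum>M\<in>Ms. e M)) * y \<in> K"
      using mult_mem_ideal_prod[OF gr_ideal_J assms(3) one_minus_sum_e_in_J] y(2) assms(4,5) by blast
    moreover have "(\<Sum>M\<in>Ms. e M * y) \<in> K"
      by (rule left_ideal_sum[OF K finite_Ms]) (use none y in blast)
    ultimately show ?thesis
      using left_ideal_add[OF K] by metis
  qed
  have "K' \<subseteq> K"
  proof
    fix a
    assume a: "a \<in> K'"
    then have "a \<in> S"
      using gr_ideal_in_S[OF assms(2)] by blast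
    then show "a \<in> K"
      using left_ideal_hcompI[OF K] homog_in_K hcomp_homog gr_ideal_hcomp[OF assms(2) a] by blast
  qed
  then show False
    using assms(6) by blast
qed

lemma colon_e_mult_eq:
  assumes "gr_ideal K" "gr_ideal L" "ideal_prod J L \<subseteq> K" "y \<in> L" "y \<in> homog k"
    and "M \<in> Ms" "e M * y \<notin> K"
  shows "colon K (e M * y) = M"
proof -
  have "M \<subseteq> colon K (e M * y)"
  proof
    fix r
    assume r: "r \<in> M"
    then have "r * e M * y \<in> K"
      using mult_mem_ideal_prod[OF gr_ideal_J assms(2) mult_e_in_J[OF assms(6) r] assms(4)] assms(3) by blast
    then show "r \<in> colon K (e M * y)"
      using r maximal_Ms[OF assms(6)] gr_ideal_in_S maximal_gr_ideal_gr_ideal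
      unfolding colon_def by (auto simp: mult.assoc)
  qed
  moreover have "gr_ideal (colon K (e M * y))"
    using gr_ideal_colon[OF assms(1) homog_mult[OF e_homog[OF assms(6)] assms(5)]] by simp
  moreover have "1 \<notin> colon K (e M * y)"
    using assms(7) unfolding colon_def by simp
  ultimately show ?thesis
    using maximal_Ms[OF assms(6)] unfolding maximal_gr_ideal_def by blast
qed

text \<open>Modulo \<open>J L\<close>, the graded ideal generated by \<open>e M * y\<close> is simple, because its annihilator is
  the maximal ideal \<open>M\<close>; this is the semisimplicity of \<open>L / J L\<close>.\<close>

lemma radical_prod_plus_cyclic_Int:
  assumes "gr_ideal K" "gr_ideal L" "ideal_prod J L \<subseteq> K" "y \<in> L" "y \<in> homog k"
    and "M \<in> Ms" "e M * y \<notin> K"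
  shows "(ideal_prod J L + S * {e M * y}) \<inter> K \<subseteq> ideal_prod J L"
proof
  fix w
  assume w: "w \<in> (ideal_prod J L + S * {e M * y}) \<inter> K"
  then obtain b s where bs: "w = b + s * (e M * y)" "b \<in> ideal_prod J L" "s \<in> S"
    by (auto elim!: set_plus_elim set_times_elim)
  have "s * (e M * y) \<in> K"
    using left_ideal_diff[OF gr_ideal_left_ideal[OF assms(1)] _ subsetD[OF assms(3) bs(2)], of w] w bs(1)
    by simp
  then have "s \<in> M"
    using colon_e_mult_eq[OF assms] bs(3) unfolding colon_def by blast
  then have "s * e M * y \<in> ideal_prod J L"
    using mult_mem_ideal_prod[OF gr_ideal_J assms(2) mult_e_in_J[OF assms(6)] assms(4)] by blast
  then show "w \<in> ideal_prod J L"
    using bs(1,2) left_ideal_add[OF gr_ideal_left_ideal[OF gr_ideal_ideal_prod]] by (simp add: mult.assoc)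
qed

lemma ex_simple_gr_ideal:
  assumes "gr_ideal K" "gr_ideal K'" "gr_ideal L" "ideal_prod J L \<subseteq> K" "K \<subseteq> K'" "K' \<subseteq> L"
    and "\<not> K' \<subseteq> K"
  shows "\<exists>A. gr_ideal A \<and> ideal_prod J L \<subseteq> A \<and> A \<subseteq> K' \<and> \<not> A \<subseteq> K \<and> A \<inter> K \<subseteq> ideal_prod J L"
proof -
  let ?B = "ideal_prod J L"
  obtain y k M where y: "y \<in> homog k" "y \<in> K'" "M \<in> Ms" "e M * y \<notin> K"
    using ex_homog_e_mult_notin[OF assms(1,2,3,4,6,7)] by blast
  let ?z = "e M * y"
  have z: "?z \<in> homog k"
    using homog_mult[OF e_homog[OF y(3)] y(1)] by simp
  have K': "left_ideal K'" and B: "left_ideal ?B"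
    using assms(2) gr_ideal_left_ideal gr_ideal_ideal_prod by blast+
  have Sz: "gr_ideal (S * {?z})"
    using gr_ideal_times_homog[OF gr_ideal_S z] .
  let ?A = "?B + S * {?z}"
  have "gr_ideal ?A"
    using gr_ideal_plus[OF gr_ideal_ideal_prod Sz] .
  moreover have "?B \<subseteq> ?A"
    using subset_plus_left[OF left_ideal_0[OF gr_ideal_left_ideal[OF Sz]]] .
  moreover have "?A \<subseteq> K'"
    using left_ideal_plus_subset[OF K'] assms(4,5)
      left_ideal_times_subset[OF K' order_refl left_ideal_mult[OF K' e_in_S[OF y(3)] y(2)]] by blast
  moreover have "\<not> ?A \<subseteq> K"
    using set_zero_plus2[OF left_ideal_0[OF B]] mem_S_times y(4) by blast
  moreover have "?A \<inter> K \<subseteq> ?B"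
    by (rule radical_prod_plus_cyclic_Int[OF assms(1,3,4) subsetD[OF assms(6) y(2)] y(1,3,4)])
  ultimately show ?thesis
    by blast
qed

lemma noetherian_between_radical_prod:
  assumes L: "gr_ideal L"
  shows "noetherian_between (ideal_prod J L) L"
proof (rule ccontr)
  let ?B = "ideal_prod J L"
  assume "\<not> noetherian_between ?B L"
  from not_noetherian_between_strict_chain[OF this]
  obtain K where K_ideals: "\<forall>k. gr_ideal (K k) \<and> ?B \<subseteq> K k \<and> K k \<subseteq> L"
    and K_strict: "\<And>k. K k \<subset> K (Suc k)"
    by blast
  have K: "\<And>k. gr_ideal (K k)" "\<And>k. ?B \<subseteq> K k" "\<And>k. K k \<subseteq> L"
    using K_ideals by simp_all
  have "\<exists>A. gr_ideal A \<and> ?B \<subseteq> A \<and> A \<subseteq> K (Suc n) \<and> \<not> A \<subseteq> K n \<and> A \<inter> K n \<subseteq> ?B" for n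
  proof (rule ex_simple_gr_ideal[OF K(1) K(1) L K(2) psubset_imp_subset[OF K_strict] K(3)])
    show "\<not> K (Suc n) \<subseteq> K n"
      using K_strict[of n] by blast
  qed
  then obtain A where A: "\<And>n. gr_ideal (A n) \<and> ?B \<subseteq> A n \<and> A n \<subseteq> K (Suc n) \<and> \<not> A n \<subseteq> K n \<and> A n \<inter> K n \<subseteq> ?B"
    by metis
  have "independent_chain G S ?B K A"
    by unfold_locales
      (use A K psubset_imp_subset[OF K_strict] gr_ideal_ideal_prod gr_ideal_left_ideal in auto)
  then show False
    using no_independent_chain by blast
qed

end

context artinian_graded_subring
begin

theorem hopkins_levitzki: "noetherian_between {} S"
proof (rule ccontr)
  assume not_noetherian: "\<not> noetherian_between {} S"
  let ?F = "{L. gr_ideal L \<and> \<not> noetherian_between {} L}"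
  have "S \<in> ?F"
    using not_noetherian gr_ideal_S by blast
  then obtain L where L: "L \<in> ?F" and L_min: "\<And>L'. L' \<in> ?F \<Longrightarrow> L' \<subseteq> L \<Longrightarrow> L' = L"
  proof (rule ex_minimal_gr_ideal)
    show "gr_ideal X" if "X \<in> ?F" for X
      using that by blast
  qed (rule that)
  have gr_L: "gr_ideal L"
    using L by blast
  obtain J Ms e where "graded_radical G S J Ms e"
    using ex_graded_radical by blast
  then interpret graded_radical G S J Ms e .
  let ?B = "ideal_prod J L"
  have B_L: "?B \<subseteq> L"
    using ideal_prod_subset[OF gr_ideal_left_ideal[OF gr_L] gr_ideal_in_S[OF gr_ideal_J]] .
  show False
  proof (cases "?B = L")
    case True
    obtain n where "ideal_power J n \<subseteq> {0}"
      using radical_nilpotent by blast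
    then have "L \<subseteq> {0}"
      using ideal_prod_eq_self_zero[OF gr_ideal_J gr_L True] by blast
    then show False
      using L noetherian_between_zero by blast
  next
    case False
    then have "noetherian_between {} ?B"
      using L_min[of ?B] B_L gr_ideal_ideal_prod by blast
    then have "noetherian_between {} L"
      using noetherian_between_trans[OF gr_ideal_ideal_prod gr_L _ B_L]
        noetherian_between_radical_prod[OF gr_L] by blast
    then show False
      using L by blast
  qed
qed

lemma acc:
  "(\<And>k. gr_ideal (f k)) \<Longrightarrow> (\<And>k. f k \<subseteq> f (Suc k)) \<Longrightarrow> \<exists>N. \<forall>k\<ge>N. f k = f N"
  using noetherian_betweenD[OF hopkins_levitzki] gr_ideal_in_S by blast

end

section \<open>Differential graded algebras\<close>

locale dga =
  fixes phi :: "'r::comm_ring_1 \<Rightarrow> 'a::ring_1" and G :: "int \<Rightarrow> 'a set" and d :: "'a \<Rightarrow> 'a"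
  assumes dg: "dg_algebra phi G d"
begin

definition cycles :: "'a set" where
  "cycles = {a. d a = 0}"

lemma graded: "graded_ring G"
  using dg unfolding dg_algebra_def graded_algebra_def by blast

lemma d_add: "d (a + b) = d a + d b"
  and d_homog: "x \<in> G n \<Longrightarrow> d x \<in> G (n + 1)"
  and d_d: "d (d a) = 0"
  and d_leibniz: "a \<in> G n \<Longrightarrow> d (a * b) = d a * b + (if even n then a * d b else - (a * d b))"
  using dg unfolding dg_algebra_def by blast+

lemma d_0: "d 0 = 0"
  using d_add[of 0 0] by simp

lemma d_uminus: "d (- a) = - d a"
proof -
  have "d a + d (- a) = 0"
    using d_add[of a "- a"] d_0 by simp
  then show ?thesis
    by (simp add: add_eq_0_iff2)
qed

lemma d_diff: "d (a - b) = d a - d b"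
  using d_add[of a "- b"] d_uminus by simp

lemma d_sum: "finite A \<Longrightarrow> d (sum f A) = (\<Sum>i\<in>A. d (f i))"
  by (induction A rule: finite_induct) (simp_all add: d_0 d_add)

lemma d_1: "d 1 = 0"
proof -
  have "1 \<in> G 0"
    using graded unfolding graded_ring_def by blast
  then show ?thesis
    using d_leibniz[of 1 0 1] by simp
qed

sublocale A: graded_subring G UNIV
proof
  show "\<exists>c. graded_decomp (\<lambda>n. G n \<inter> UNIV) a c" for a
    using graded unfolding graded_ring_def by simp
qed (simp_all add: graded)

lemma A_homog: "A.homog n = G n"
  by (simp add: A.homog_def)

lemma hcomp_d: "A.hcomp n (d x) = d (A.hcomp (n - 1) x)"
proof -
  let ?U = "(\<lambda>m. m + 1) ` {n. A.hcomp n x \<noteq> 0}"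
  have fin: "finite ?U"
    using A.finite_hcomp_support by blast
  have "(\<Sum>n\<in>?U. d (A.hcomp (n - 1) x)) = (\<Sum>m | A.hcomp m x \<noteq> 0. d (A.hcomp m x))"
    by (subst sum.reindex) (auto simp: inj_on_def)
  also have "\<dots> = d x"
    using d_sum[OF A.finite_hcomp_support[of x], of "\<lambda>m. A.hcomp m x"]
      A.sum_hcomp[OF _ A.finite_hcomp_support order_refl, of x] by simp
  finally show ?thesis
  proof (intro A.hcomp_eqI[OF fin])
    show "d (A.hcomp (n - 1) x) = 0" if "n \<notin> ?U" for n
      using that d_0 by (metis (mono_tags) diff_add_cancel image_eqI mem_Collect_eq)
    show "d (A.hcomp (n - 1) x) \<in> A.homog n" for n
      using d_homog[of "A.hcomp (n - 1) x" "n - 1"] A.hcomp_homog[of x "n - 1"] A_homog by simp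
  qed simp
qed

lemma d_hcomp_cycle: "a \<in> cycles \<Longrightarrow> d (A.hcomp n a) = 0"
  using hcomp_d[of "n + 1" a] A.hcomp_0 by (simp add: cycles_def)

lemma cycles_mult:
  assumes "a \<in> cycles" "b \<in> cycles"
  shows "a * b \<in> cycles"
proof -
  let ?U = "{n. A.hcomp n a \<noteq> 0}"
  have "a * b = (\<Sum>n\<in>?U. A.hcomp n a) * b"
    using A.sum_hcomp[OF _ A.finite_hcomp_support order_refl, of a] by simp
  also have "\<dots> = (\<Sum>n\<in>?U. A.hcomp n a * b)"
    by (rule sum_distrib_right)
  finally have "d (a * b) = (\<Sum>n\<in>?U. d (A.hcomp n a * b))"
    using d_sum[OF A.finite_hcomp_support[of a]] by simp
  also have "\<dots> = (\<Sum>n\<in>?U. d (A.hcomp n a) * b)"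
  proof (rule sum.cong)
    show "d (A.hcomp n a * b) = d (A.hcomp n a) * b" for n
      using d_leibniz[OF A.hcomp_homog[of a n, unfolded A_homog], of b] assms(2) by (simp add: cycles_def)
  qed simp
  also have "\<dots> = 0"
    using d_hcomp_cycle[OF assms(1)] by simp
  finally show ?thesis
    by (simp add: cycles_def)
qed

sublocale Z: graded_subring G cycles
proof
  show "x * y \<in> cycles" if "x \<in> cycles" "y \<in> cycles" for x y
    using cycles_mult[OF that] .
  show "\<exists>c. graded_decomp (\<lambda>n. G n \<inter> cycles) a c" if a: "a \<in> cycles" for a
  proof
    have "finite {n. A.hcomp n a \<noteq> 0}" "\<And>n. A.hcomp n a \<in> G n"
      "a = (\<Sum>n | A.hcomp n a \<noteq> 0. A.hcomp n a)"
      using A.hcomp_decomp[of a] unfolding graded_decomp_def A_homog by blast+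
    then show "graded_decomp (\<lambda>n. G n \<inter> cycles) a (\<lambda>n. A.hcomp n a)"
      using d_hcomp_cycle[OF a] unfolding graded_decomp_def cycles_def by blast
  qed
next
  show "x + y \<in> cycles" if "x \<in> cycles" "y \<in> cycles" for x y
    using that d_add by (simp add: cycles_def)
  show "- x \<in> cycles" if "x \<in> cycles" for x
    using that d_uminus by (simp add: cycles_def)
next
  show "graded_ring G"
    by (rule graded)
  show "1 \<in> cycles"
    using d_1 by (simp add: cycles_def)
qed

lemma Z_hcomp:
  assumes "a \<in> cycles"
  shows "Z.hcomp n a = A.hcomp n a"
proof -
  have dec: "finite {n. Z.hcomp n a \<noteq> 0}" "\<And>n. Z.hcomp n a \<in> Z.homog n"
    "a = (\<Sum>n | Z.hcomp n a \<noteq> 0. Z.hcomp n a)"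
    using Z.hcomp_decomp[OF assms] unfolding graded_decomp_def by blast+
  have "A.hcomp n a = Z.hcomp n a"
  proof (rule A.hcomp_eqI[OF dec(1)])
    show "Z.hcomp n a \<in> A.homog n" for n
      using Z.homog_in_G[OF dec(2)] A_homog by simp
  qed (use dec(3) in simp_all)
  then show ?thesis
    by simp
qed

lemma dg_ideal_gr_ideal: "dg_ideal G d I \<Longrightarrow> A.gr_ideal I"
  unfolding dg_ideal_def using A.graded_left_ideal_iff by blast

lemma dg_ideal_left_ideal: "dg_ideal G d I \<Longrightarrow> A.left_ideal I"
  using dg_ideal_gr_ideal A.gr_ideal_left_ideal by blast

lemma gr_ideal_Int_cycles:
  assumes "dg_ideal G d I"
  shows "Z.gr_ideal (I \<inter> cycles)"
proof -
  have I: "A.left_ideal I"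
    using dg_ideal_left_ideal[OF assms] .
  have "Z.left_ideal (I \<inter> cycles)"
    unfolding Z.left_ideal_def
    using A.left_ideal_0[OF I] A.left_ideal_add[OF I] A.left_ideal_mult[OF I] d_0 d_add cycles_mult
    by (auto simp: cycles_def)
  moreover have "Z.hcomp n a \<in> I \<inter> cycles" if "a \<in> I \<inter> cycles" for a n
    using that Z_hcomp A.gr_ideal_hcomp[OF dg_ideal_gr_ideal[OF assms]] d_hcomp_cycle
    by (auto simp: cycles_def)
  ultimately show ?thesis
    unfolding Z.gr_ideal_def by blast
qed

lemma cycle_mult_d:
  assumes "s \<in> G n" "d s = 0"
  shows "s * d y = d (if even n then s * y else - (s * y))"
  using d_leibniz[OF assms(1), of y] assms(2) d_uminus by simp

lemma cycle_mult_image_d: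
  assumes "dg_ideal G d I" "s \<in> cycles" "x \<in> d ` I"
  shows "s * x \<in> d ` I"
proof -
  have I: "A.left_ideal I"
    using dg_ideal_left_ideal[OF assms(1)] .
  obtain y where y: "y \<in> I" "x = d y"
    using assms(3) by blast
  let ?U = "{n. A.hcomp n s \<noteq> 0}"
  define c where "c n = (if even n then A.hcomp n s * y else - (A.hcomp n s * y))" for n
  have c: "c n \<in> I" for n
    using A.left_ideal_mult[OF I _ y(1)] A.left_ideal_uminus[OF I] unfolding c_def by simp
  have "s * x = (\<Sum>n\<in>?U. A.hcomp n s) * x"
    using A.sum_hcomp[OF _ A.finite_hcomp_support order_refl, of s] by simp
  also have "\<dots> = (\<Sum>n\<in>?U. d (c n))"
    unfolding sum_distrib_right c_def y(2)
    using cycle_mult_d[OF A.hcomp_homog[of s, unfolded A_homog] d_hcomp_cycle[OF assms(2)]] by simp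
  also have "\<dots> = d (\<Sum>n\<in>?U. c n)"
    using d_sum[OF A.finite_hcomp_support[of s]] by simp
  finally show ?thesis
    using A.left_ideal_sum[OF I A.finite_hcomp_support[of s]] c by blast
qed

lemma gr_ideal_image_d:
  assumes "dg_ideal G d I"
  shows "Z.gr_ideal (d ` I)"
proof -
  have I: "A.left_ideal I"
    using dg_ideal_left_ideal[OF assms] .
  have add: "x + y \<in> d ` I" if xy: "x \<in> d ` I" "y \<in> d ` I" for x y
  proof -
    obtain a b where ab: "a \<in> I" "b \<in> I" "x = d a" "y = d b"
      using xy by blast
    then have "x + y = d (a + b)"
      by (simp add: d_add)
    moreover have "a + b \<in> I"
      using A.left_ideal_add[OF I ab(1,2)] .
    ultimately show ?thesis
      by (rule image_eqI)
  qed
  have zero: "0 \<in> d ` I"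
    using A.left_ideal_0[OF I] d_0 by (metis image_eqI)
  have mult: "s * x \<in> d ` I" if "s \<in> cycles" "x \<in> d ` I" for s x
    using cycle_mult_image_d[OF assms that] .
  have "Z.hcomp n a \<in> d ` I" if a: "a \<in> d ` I" for a n
  proof -
    obtain y where y: "y \<in> I" "a = d y"
      using a by blast
    then have "Z.hcomp n a = d (A.hcomp (n - 1) y)"
      using Z_hcomp[of a] hcomp_d d_d by (simp add: cycles_def)
    then show ?thesis
      using A.gr_ideal_hcomp[OF dg_ideal_gr_ideal[OF assms] y(1)] by blast
  qed
  moreover have "d ` I \<subseteq> cycles"
    using d_d by (auto simp: cycles_def)
  ultimately show ?thesis
    unfolding Z.gr_ideal_def Z.left_ideal_def using zero add mult by blast
qed

lemma dg_ideal_eqI: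
  assumes "dg_ideal G d I" "dg_ideal G d I'" "I \<subseteq> I'"
    and "I \<inter> cycles = I' \<inter> cycles" "d ` I = d ` I'"
  shows "I = I'"
proof
  show "I' \<subseteq> I"
  proof
    fix x
    assume x: "x \<in> I'"
    then obtain y where y: "y \<in> I" "d x = d y"
      using assms(5) by (metis imageE imageI)
    have "x - y \<in> I' \<inter> cycles"
      using A.left_ideal_diff[OF dg_ideal_left_ideal[OF assms(2)] x] y assms(3) d_diff
      by (auto simp: cycles_def)
    then have "x - y \<in> I"
      using assms(4) by blast
    then show "x \<in> I"
      using A.left_ideal_add[OF dg_ideal_left_ideal[OF assms(1)] _ y(1)] by fastforce
  qed
qed (rule assms(3))

lemma dg_chain_stabilizes:
  fixes f :: "nat \<Rightarrow> 'a set"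
  assumes "\<And>k. dg_ideal G d (f k)" "\<And>i j. i \<le> j \<Longrightarrow> f i \<subseteq> f j \<or> f j \<subseteq> f i"
    and "\<exists>N. \<forall>k\<ge>N. f k \<inter> cycles = f N \<inter> cycles" "\<exists>N. \<forall>k\<ge>N. d ` f k = d ` f N"
  shows "\<exists>N. \<forall>k\<ge>N. f k = f N"
proof -
  have "f i = f j" if "i \<le> j" "f i \<inter> cycles = f j \<inter> cycles" "d ` f i = d ` f j" for i j
    using assms(2)[OF that(1)] dg_ideal_eqI[OF assms(1) assms(1)] that(2,3) by metis
  with assms(3,4) show ?thesis
    by (rule eventually_const_by_invariants)
qed

end

locale dga_artinian_cycles = dga +
  assumes artinian_cycles: "graded_artinian G {a. d a = 0}"
begin

sublocale Z: artinian_graded_subring G cycles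
  by unfold_locales (simp add: cycles_def artinian_cycles)

lemma dg_noetherian: "dg_noetherian G d"
  unfolding dg_noetherian_def
proof (intro allI impI, elim conjE)
  fix f :: "nat \<Rightarrow> _"
  assume dg: "\<forall>k. dg_ideal G d (f k)" and inc: "\<forall>k. f k \<subseteq> f (Suc k)"
  show "\<exists>N. \<forall>k\<ge>N. f k = f N"
  proof (rule dg_chain_stabilizes)
    show "f i \<subseteq> f j \<or> f j \<subseteq> f i" if "i \<le> j" for i j
      using lift_Suc_mono_le[of f, OF _ that] inc by blast
    show "\<exists>N. \<forall>k\<ge>N. f k \<inter> cycles = f N \<inter> cycles"
      by (rule Z.acc) (use dg inc gr_ideal_Int_cycles in auto)
    show "\<exists>N. \<forall>k\<ge>N. d ` f k = d ` f N"
      by (rule Z.acc) (use dg inc gr_ideal_image_d in auto)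
  qed (use dg in blast)
qed

lemma dg_artinian: "dg_artinian G d"
  unfolding dg_artinian_def
proof (intro allI impI, elim conjE)
  fix f :: "nat \<Rightarrow> _"
  assume dg: "\<forall>k. dg_ideal G d (f k)" and dec: "\<forall>k. f (Suc k) \<subseteq> f k"
  show "\<exists>N. \<forall>k\<ge>N. f k = f N"
  proof (rule dg_chain_stabilizes)
    show "f i \<subseteq> f j \<or> f j \<subseteq> f i" if "i \<le> j" for i j
      using lift_Suc_antimono_le[of f, OF _ that] dec by blast
    show "\<exists>N. \<forall>k\<ge>N. f k \<inter> cycles = f N \<inter> cycles"
      by (rule Z.dcc) (use dg dec gr_ideal_Int_cycles in auto)
    show "\<exists>N. \<forall>k\<ge>N. d ` f k = d ` f N"
      by (rule Z.dcc) (use dg dec gr_ideal_image_d in auto)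
  qed (use dg in blast)
qed

end

theorem proposition2p4:
  fixes phi :: "'r::comm_ring_1 \<Rightarrow> 'a::ring_1"
    and G :: "int \<Rightarrow> 'a set"
    and d :: "'a \<Rightarrow> 'a"
  assumes "dg_algebra phi G d"
    and "graded_artinian G {a. d a = 0}"
  shows "dg_noetherian G d \<and> dg_artinian G d"
proof -
  interpret dga_artinian_cycles phi G d
    by (intro dga_artinian_cycles.intro dga.intro dga_artinian_cycles_axioms.intro assms)
  show ?thesis
    using dg_noetherian dg_artinian by blast
qed

end
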